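(* Let $R$ be a finite local Frobenius ring with a fixed primitive additive character $\psi$, and let $\tau$ be a non-primitive multiplicative character of $R$. (i) If $\chi$ is a primitive multiplicative character of $R$, then $\sum_{a\in R^\times}\chi(a)K_\tau(a)^2=J(\chi,\chi\tau^2)\,G(\chi\tau)^2$. (ii) If $R$ is not a field and has odd characteristic, and $\chi$ is a non-primitive multiplicative character of $R$, then $$\sum_{a\in R^\times}\chi(a)K_\tau(a)^2=\begin{cases}\tau(-1)\,|R^\times|\,|R| &\text{if }\chi=\overline{\tau}\text{ or }\chi=\sigma\overline{\tau},\\ 0&\text{otherwise.}\end{cases}$$
   Context: All rings are finite and commutative with identity; $R^\times$ is the unit group; $M$ is the maximal ideal. An additive character $(R,+)\to\mathbb{C}^*$ is primitive if the only ideal on which it is identically $1$ is $(0)$; $R$ is Frobenius if such a character exists. A multiplicative character is a homomorphism $R^\times\to\mathbb{C}^*$; its conductor is $R$ if it is trivial, and otherwise the largest ideal $I\subseteq M$ such that it is identically $1$ on $1+I$; it is primitive if its conductor is $(0)$. $K_\tau(a)=\sum_{u\in R^\times}\tau(u)\psi(u+au^{-1})$; $G(\chi)=\sum_{u\in R^\times}\psi(u)\chi(u)$; $J(\chi,\eta)=\sum_{u,v\in R^\times,\,u+v=1}\chi(u)\eta(v)$. Odd characteristic means $R/M$ has odd characteristic; $\sigma$ is the quadratic character $u\mapsto$ quadratic character of the class of $u$ in $R/M$; $\overline\tau$ is the conjugate character. *)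

theory Defs
  imports Complex_Main
begin

definition ring_ideal :: "'a::comm_ring_1 set \<Rightarrow> bool" where
  "ring_ideal I \<longleftrightarrow> 0 \<in> I \<and> (\<forall>x\<in>I. \<forall>y\<in>I. x + y \<in> I) \<and> (\<forall>r. \<forall>x\<in>I. r * x \<in> I)"

definition maximal_ideal :: "'a::comm_ring_1 set \<Rightarrow> bool" where
  "maximal_ideal I \<longleftrightarrow> ring_ideal I \<and> I \<noteq> UNIV \<and>
     (\<forall>J. ring_ideal J \<and> I \<subseteq> J \<longrightarrow> J = I \<or> J = UNIV)"

definition local_ring :: "'a::comm_ring_1 itself \<Rightarrow> bool" where
  "local_ring _ \<longleftrightarrow> (\<exists>!M::'a set. maximal_ideal M)"

definition maxid :: "'a::comm_ring_1 set" where
  "maxid = (THE M. maximal_ideal M)"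

definition runits :: "'a::comm_ring_1 set" where
  "runits = {u. u dvd 1}"

definition uinv :: "'a::comm_ring_1 \<Rightarrow> 'a" where
  "uinv u = (THE v. u * v = 1)"

definition is_field_ring :: "'a::comm_ring_1 itself \<Rightarrow> bool" where
  "is_field_ring _ \<longleftrightarrow> (\<forall>x::'a. x \<noteq> 0 \<longrightarrow> x dvd 1)"

definition residue_char :: "'a::comm_ring_1 itself \<Rightarrow> nat" where
  "residue_char _ = (LEAST n. n > 0 \<and> (of_nat n :: 'a) \<in> maxid)"

definition additive_char :: "('a::comm_ring_1 \<Rightarrow> complex) \<Rightarrow> bool" where
  "additive_char \<psi> \<longleftrightarrow> (\<forall>x y. \<psi> (x + y) = \<psi> x * \<psi> y) \<and> (\<forall>x. \<psi> x \<noteq> 0)"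

definition primitive_additive_char :: "('a::comm_ring_1 \<Rightarrow> complex) \<Rightarrow> bool" where
  "primitive_additive_char \<psi> \<longleftrightarrow> additive_char \<psi> \<and>
     (\<forall>I. ring_ideal I \<and> (\<forall>x\<in>I. \<psi> x = 1) \<longrightarrow> I = {0})"

text \<open>A multiplicative character R^x -> C^*, represented as a function on R that
  vanishes off the units (unique such extension).\<close>
definition mult_char :: "('a::comm_ring_1 \<Rightarrow> complex) \<Rightarrow> bool" where
  "mult_char \<chi> \<longleftrightarrow> (\<forall>u\<in>runits. \<forall>v\<in>runits. \<chi> (u * v) = \<chi> u * \<chi> v)
     \<and> (\<forall>u\<in>runits. \<chi> u \<noteq> 0) \<and> (\<forall>x. x \<notin> runits \<longrightarrow> \<chi> x = 0)"

definition trivial_char :: "('a::comm_ring_1 \<Rightarrow> complex) \<Rightarrow> bool" where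
  "trivial_char \<chi> \<longleftrightarrow> (\<forall>u\<in>runits. \<chi> u = 1)"

definition conductor :: "('a::comm_ring_1 \<Rightarrow> complex) \<Rightarrow> 'a set" where
  "conductor \<chi> = (if trivial_char \<chi> then UNIV else
     (THE I. ring_ideal I \<and> I \<subseteq> maxid \<and> (\<forall>x\<in>I. \<chi> (1 + x) = 1) \<and>
        (\<forall>J. ring_ideal J \<and> J \<subseteq> maxid \<and> (\<forall>x\<in>J. \<chi> (1 + x) = 1) \<longrightarrow> J \<subseteq> I)))"

definition primitive_mult_char :: "('a::comm_ring_1 \<Rightarrow> complex) \<Rightarrow> bool" where
  "primitive_mult_char \<chi> \<longleftrightarrow> conductor \<chi> = {0}"

definition quad_char :: "'a::comm_ring_1 \<Rightarrow> complex" where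
  "quad_char u = (if u \<notin> runits then 0
     else if (\<exists>v. u - v * v \<in> maxid) then 1 else -1)"

definition kloosterman :: "('a::comm_ring_1 \<Rightarrow> complex) \<Rightarrow> ('a \<Rightarrow> complex) \<Rightarrow> 'a \<Rightarrow> complex" where
  "kloosterman \<psi> \<tau> a = (\<Sum>u\<in>runits. \<tau> u * \<psi> (u + a * uinv u))"

definition gauss_sum :: "('a::comm_ring_1 \<Rightarrow> complex) \<Rightarrow> ('a \<Rightarrow> complex) \<Rightarrow> complex" where
  "gauss_sum \<psi> \<chi> = (\<Sum>u\<in>runits. \<psi> u * \<chi> u)"

definition jacobi_sum :: "('a::comm_ring_1 \<Rightarrow> complex) \<Rightarrow> ('a \<Rightarrow> complex) \<Rightarrow> complex" where
  "jacobi_sum \<chi> \<eta> = (\<Sum>(u, v)\<in>{(u, v). u \<in> runits \<and> v \<in> runits \<and> u + v = 1}. \<chi> u * \<eta> v)"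

end

theory Submission
  imports Defs
begin

text \<open>
  Let \<open>A\<close> be the annihilator of the maximal ideal \<open>M\<close>. As \<open>R\<close> is Frobenius, \<open>A\<close> is the unique
  minimal nonzero ideal, so a multiplicative character is primitive iff it is nontrivial on \<open>1 + A\<close>
  (iff it is nontrivial, when \<open>R\<close> is a field).

  (i) Expanding \<open>K\<^sub>\<tau>(a)\<^sup>2\<close> and substituting \<open>a = u v x\<close> gives \<open>\<Sum>\<^sub>x \<chi>(x) T(1 + x)\<^sup>2\<close> with
  \<open>T(b) = \<Sum>\<^sub>u \<chi>\<tau>(u) \<psi>(u b)\<close>. Since \<open>\<tau>\<close> is trivial on \<open>1 + A\<close> and \<open>\<chi>\<close> is not, \<open>\<chi>\<tau>\<close> is primitive,
  so \<open>T(b) = \<chi>\<tau>(b)\<^sup>-\<^sup>1 G(\<chi>\<tau>)\<close> for units \<open>b\<close> and \<open>T(b) = 0\<close> otherwise; what is left is the Jacobi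
  sum \<open>J(\<chi>, \<chi>\<tau>\<^sup>2)\<close>.

  (ii) Now \<open>\<chi>\<close> and \<open>\<tau>\<close> are trivial on \<open>1 + A\<close>. Averaging over \<open>a \<mapsto> (1 + s) a\<close>, \<open>s \<in> A\<close>, kills the
  \<open>(u, v)\<close>-terms of \<open>K\<^sub>\<tau>(a)\<^sup>2\<close> with \<open>u + v \<notin> M\<close>. The others are evaluated through
  \<open>(u, v) = (x + y, y - x)\<close> with \<open>y \<in> M\<close>: a unit has \<open>1 + \<sigma>(z)\<close> square roots, and orthogonality
  over \<open>M\<close> leaves only \<open>z\<close> with \<open>1 - a/z \<in> A\<close>, which gives \<open>\<tau>(-1) |R| \<tau>(a) (1 + \<sigma>(a))\<close>.
  Orthogonality of \<open>\<chi>\<tau>\<close> and \<open>\<chi>\<tau>\<sigma>\<close> over \<open>R\<^sup>\<times>\<close> finishes the computation.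
\<close>

section \<open>Units and ideals\<close>

lemma runits_iff: "u \<in> runits \<longleftrightarrow> (\<exists>v. u * v = 1)"
  unfolding runits_def dvd_def by (simp add: eq_commute[of 1])

lemma uinv_eqI: assumes "u * v = 1" shows "uinv u = v"
  unfolding uinv_def
proof (rule the_equality)
  fix w assume "u * w = 1"
  then have "w = w * (u * v)" using assms by simp
  also have "\<dots> = v * (u * w)" by (simp add: algebra_simps)
  finally show "w = v" using \<open>u * w = 1\<close> by simp
qed (rule assms)

lemma runit_right_inverse: "u \<in> runits \<Longrightarrow> u * uinv u = 1"
  using uinv_eqI runits_iff by metis

lemma runit_left_inverse: "u \<in> runits \<Longrightarrow> uinv u * u = 1"
  using runit_right_inverse by (simp add: mult.commute)

lemma uinv_runits: "u \<in> runits \<Longrightarrow> uinv u \<in> runits"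
  using runit_left_inverse runits_iff by blast

lemma uinv_uinv: "u \<in> runits \<Longrightarrow> uinv (uinv u) = u"
  using uinv_eqI runit_left_inverse by blast

lemma uinv_mult_distrib:
  assumes "u \<in> runits" "v \<in> runits"
  shows "uinv (u * v) = uinv u * uinv v"
proof (rule uinv_eqI)
  have "(u * v) * (uinv u * uinv v) = (u * uinv u) * (v * uinv v)" by (simp add: algebra_simps)
  then show "(u * v) * (uinv u * uinv v) = 1" using assms by (simp add: runit_right_inverse)
qed

lemma mult_runits: "u \<in> runits \<Longrightarrow> v \<in> runits \<Longrightarrow> u * v \<in> runits"
  unfolding runits_def using mult_dvd_mono[of u 1 v 1] by simp

lemma one_runits [simp]: "1 \<in> runits"
  unfolding runits_def by simp

lemma uminus_runits: "u \<in> runits \<Longrightarrow> - u \<in> runits"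
  unfolding runits_def by simp

lemma uminus_one_runits [simp]: "- 1 \<in> runits"
  by (rule uminus_runits) simp

lemma uinv_uminus: "z \<in> runits \<Longrightarrow> uinv (- z) = - uinv z"
  using uinv_eqI[of "- z" "- uinv z"] runit_right_inverse[of z] by simp

lemma uinv_add:
  assumes "p \<in> runits" "q \<in> runits"
  shows "uinv p + uinv q = (p + q) * uinv (p * q)"
proof -
  have "(p + q) * uinv (p * q) = (p * uinv p) * uinv q + (q * uinv q) * uinv p"
    unfolding uinv_mult_distrib[OF assms] by (simp add: algebra_simps)
  then show ?thesis using assms by (simp add: runit_right_inverse add.commute)
qed

lemma runit_mult_left_cancel:
  assumes "u \<in> runits" "u * x = u * y" shows "x = y"
proof -
  have "uinv u * (u * x) = uinv u * (u * y)" using assms by simp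
  then show ?thesis using runit_left_inverse[OF assms(1)] by (simp add: mult.assoc[symmetric])
qed

lemma runit_mult_eq_0: "u \<in> runits \<Longrightarrow> u * x = 0 \<Longrightarrow> x = 0"
  using runit_mult_left_cancel[of u x 0] by simp

lemma sum_runits_reindex_mult:
  assumes "c \<in> runits"
  shows "(\<Sum>u\<in>runits. f (c * u)) = (\<Sum>u\<in>runits. f u)"
proof (rule sum.reindex_bij_witness[where j = "\<lambda>u. c * u" and i = "\<lambda>u. uinv c * u"])
  fix a assume "a \<in> (runits::'a set)"
  show "uinv c * (c * a) = a" using runit_left_inverse[OF assms] by (simp add: mult.assoc[symmetric])
  show "c * a \<in> runits" using mult_runits[OF assms \<open>a \<in> runits\<close>] .
next
  fix b assume "b \<in> (runits::'a set)"
  show "c * (uinv c * b) = b" using runit_right_inverse[OF assms] by (simp add: mult.assoc[symmetric])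
  show "uinv c * b \<in> runits" using mult_runits[OF uinv_runits[OF assms] \<open>b \<in> runits\<close>] .
qed simp

lemma sum_comp_eq_sum_card_fibres:
  fixes f :: "'b \<Rightarrow> 'c::comm_semiring_1"
  assumes "finite A" "finite B" "\<phi> ` A \<subseteq> B"
  shows "(\<Sum>x\<in>A. f (\<phi> x)) = (\<Sum>z\<in>B. of_nat (card {x\<in>A. \<phi> x = z}) * f z)"
proof -
  have "(\<Sum>x\<in>A. f (\<phi> x)) = (\<Sum>z\<in>B. \<Sum>x\<in>{x\<in>A. \<phi> x = z}. f (\<phi> x))"
    by (rule sum.group[symmetric]) (use assms in auto)
  also have "\<dots> = (\<Sum>z\<in>B. of_nat (card {x\<in>A. \<phi> x = z}) * f z)"
    by (rule sum.cong[OF refl]) simp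
  finally show ?thesis .
qed

lemma ring_ideal_zero: "ring_ideal I \<Longrightarrow> 0 \<in> I"
  unfolding ring_ideal_def by blast

lemma ring_ideal_add: "ring_ideal I \<Longrightarrow> x \<in> I \<Longrightarrow> y \<in> I \<Longrightarrow> x + y \<in> I"
  unfolding ring_ideal_def by blast

lemma ring_ideal_mult_left: "ring_ideal I \<Longrightarrow> x \<in> I \<Longrightarrow> r * x \<in> I"
  unfolding ring_ideal_def by blast

lemma ring_ideal_mult_right: "ring_ideal I \<Longrightarrow> x \<in> I \<Longrightarrow> x * r \<in> I"
  unfolding ring_ideal_def by (metis mult.commute)

lemma ring_ideal_uminus: "ring_ideal I \<Longrightarrow> x \<in> I \<Longrightarrow> - x \<in> I"
  using ring_ideal_mult_left[of I x "-1"] by simp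

lemma ring_ideal_diff: "ring_ideal I \<Longrightarrow> x \<in> I \<Longrightarrow> y \<in> I \<Longrightarrow> x - y \<in> I"
  using ring_ideal_add[of I x "- y"] ring_ideal_uminus[of I y] by simp

lemma ring_ideal_UNIV: "ring_ideal (UNIV :: 'a::comm_ring_1 set)"
  unfolding ring_ideal_def by auto


lemma ring_ideal_image_mult:
  assumes "ring_ideal I" shows "ring_ideal ((\<lambda>y. c * y) ` I)"
  unfolding ring_ideal_def
proof (intro conjI ballI allI)
  show "0 \<in> (\<lambda>y. c * y) ` I" using ring_ideal_zero[OF assms] by (metis image_eqI mult_zero_right)
  fix x y assume "x \<in> (\<lambda>y. c * y) ` I" "y \<in> (\<lambda>y. c * y) ` I"
  then obtain a b where "x = c * a" "y = c * b" "a \<in> I" "b \<in> I" by blast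
  then show "x + y \<in> (\<lambda>y. c * y) ` I" using ring_ideal_add[OF assms] by (metis distrib_left image_eqI)
next
  fix r x assume "x \<in> (\<lambda>y. c * y) ` I"
  then obtain a where "x = c * a" "a \<in> I" by blast
  then show "r * x \<in> (\<lambda>y. c * y) ` I"
    using ring_ideal_mult_left[OF assms] by (metis image_eqI mult.left_commute)
qed

lemma ring_ideal_principal: "ring_ideal (range (\<lambda>r. r * (x::'a::comm_ring_1)))"
  using ring_ideal_image_mult[OF ring_ideal_UNIV, of x] by (simp add: mult.commute)

lemma ring_ideal_sum:
  assumes I: "ring_ideal I" and J: "ring_ideal J"
  shows "ring_ideal {i + j |i j. i \<in> I \<and> j \<in> J}"
  unfolding ring_ideal_def
proof (intro conjI ballI allI)
  show "0 \<in> {i + j |i j. i \<in> I \<and> j \<in> J}" using ring_ideal_zero[OF I] ring_ideal_zero[OF J] by force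
  fix x y assume "x \<in> {i + j |i j. i \<in> I \<and> j \<in> J}" "y \<in> {i + j |i j. i \<in> I \<and> j \<in> J}"
  then obtain i j i' j' where "x + y = (i + i') + (j + j')" "i \<in> I" "j \<in> J" "i' \<in> I" "j' \<in> J"
    by (auto simp: algebra_simps)
  then show "x + y \<in> {i + j |i j. i \<in> I \<and> j \<in> J}" using ring_ideal_add[OF I] ring_ideal_add[OF J] by blast
next
  fix r x assume "x \<in> {i + j |i j. i \<in> I \<and> j \<in> J}"
  then obtain i j where "r * x = r * i + r * j" "i \<in> I" "j \<in> J" by (auto simp: distrib_left)
  then show "r * x \<in> {i + j |i j. i \<in> I \<and> j \<in> J}"
    using ring_ideal_mult_left[OF I] ring_ideal_mult_left[OF J] by blast
qed

lemma ring_ideal_runit_eq_UNIV: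
  assumes "ring_ideal I" "u \<in> I" "u \<in> runits" shows "I = UNIV"
proof -
  have "r \<in> I" for r
    using ring_ideal_mult_left[OF assms(1,2), of "r * uinv u"] runit_left_inverse[OF assms(3)]
    by (simp add: mult.assoc)
  then show ?thesis by auto
qed

section \<open>Characters\<close>

lemma mult_char_mult: "mult_char \<chi> \<Longrightarrow> u \<in> runits \<Longrightarrow> v \<in> runits \<Longrightarrow> \<chi> (u * v) = \<chi> u * \<chi> v"
  unfolding mult_char_def by blast

lemma mult_char_nonzero: "mult_char \<chi> \<Longrightarrow> u \<in> runits \<Longrightarrow> \<chi> u \<noteq> 0"
  unfolding mult_char_def by blast

lemma mult_char_nonunit: "mult_char \<chi> \<Longrightarrow> x \<notin> runits \<Longrightarrow> \<chi> x = 0"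
  unfolding mult_char_def by blast

lemma mult_char_one: assumes "mult_char \<chi>" shows "\<chi> 1 = 1"
  using mult_char_mult[OF assms, of 1 1] mult_char_nonzero[OF assms, of 1] by simp

lemma mult_char_mult_char: "mult_char \<chi> \<Longrightarrow> mult_char \<eta> \<Longrightarrow> mult_char (\<lambda>u. \<chi> u * \<eta> u)"
  unfolding mult_char_def by (auto simp: algebra_simps)

lemma sum_mult_char_eq_0:
  fixes \<chi> :: "'a::{comm_ring_1,finite} \<Rightarrow> complex"
  assumes \<chi>: "mult_char \<chi>" and nontriv: "\<not> trivial_char \<chi>"
  shows "(\<Sum>u\<in>runits. \<chi> u) = 0"
proof -
  obtain c where c: "c \<in> runits" "\<chi> c \<noteq> 1" using nontriv unfolding trivial_char_def by blast
  have "(\<Sum>u\<in>runits. \<chi> u) = (\<Sum>u\<in>runits. \<chi> (c * u))"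
    using sum_runits_reindex_mult[OF c(1), of \<chi>] by simp
  also have "\<dots> = \<chi> c * (\<Sum>u\<in>runits. \<chi> u)"
    by (simp add: sum_distrib_left mult_char_mult[OF \<chi> c(1)])
  finally have "(1 - \<chi> c) * (\<Sum>u\<in>runits. \<chi> u) = 0" by (simp add: algebra_simps)
  then show ?thesis using c(2) by simp
qed

lemma norm_mult_char:
  fixes \<chi> :: "'a::{comm_ring_1,finite} \<Rightarrow> complex"
  assumes "mult_char \<chi>" "u \<in> runits"
  shows "norm (\<chi> u) = 1"
proof -
  have "\<not> inj (\<lambda>n::nat. u ^ n)"
    using finite_imageD[of "\<lambda>n::nat. u ^ n" UNIV] by auto
  then obtain i j :: nat where ij: "i \<noteq> j" "u ^ i = u ^ j"
    unfolding inj_def by blast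
  have "u ^ n \<in> runits \<and> \<chi> (u ^ n) = \<chi> u ^ n" for n
    by (induction n) (auto simp: mult_char_one[OF assms(1)] mult_runits[OF assms(2)]
          mult_char_mult[OF assms(1) assms(2)])
  then have "norm (\<chi> u) ^ i = norm (\<chi> u) ^ j" using ij(2) by (metis norm_power)
  moreover have "norm (\<chi> u) > 0" using mult_char_nonzero[OF assms] by simp
  ultimately show ?thesis using ij(1) by (metis power_inject_exp' nat_neq_iff)
qed

lemma mult_char_times_cnj:
  fixes \<chi> :: "'a::{comm_ring_1,finite} \<Rightarrow> complex"
  assumes "mult_char \<chi>" "u \<in> runits"
  shows "\<chi> u * cnj (\<chi> u) = 1"
  using norm_mult_char[OF assms] by (simp add: complex_norm_square[symmetric])

lemma mult_char_inverse_iff: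
  fixes \<chi> \<eta> :: "'a::{comm_ring_1,finite} \<Rightarrow> complex"
  assumes "mult_char \<chi>" "mult_char \<eta>"
  shows "(\<forall>u\<in>runits. \<chi> u * \<eta> u = 1) \<longleftrightarrow> \<chi> = (\<lambda>u. cnj (\<eta> u))"
proof
  assume h: "\<forall>u\<in>runits. \<chi> u * \<eta> u = 1"
  show "\<chi> = (\<lambda>u. cnj (\<eta> u))"
  proof
    fix x :: 'a
    show "\<chi> x = cnj (\<eta> x)"
    proof (cases "x \<in> runits")
      case True
      have "\<chi> x = (\<chi> x * \<eta> x) * cnj (\<eta> x)"
        using mult_char_times_cnj[OF assms(2) True] by (simp add: mult.assoc)
      then show ?thesis using h True by simp
    qed (simp add: assms mult_char_nonunit)
  qed
qed (use mult_char_times_cnj[OF assms(2)] in \<open>simp add: mult.commute\<close>)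

lemma sum_mult_char_mult_char:
  fixes \<chi> \<eta> :: "'a::{comm_ring_1,finite} \<Rightarrow> complex"
  assumes \<chi>: "mult_char \<chi>" and \<eta>: "mult_char \<eta>"
  shows "(\<Sum>u\<in>runits. \<chi> u * \<eta> u) = (if \<chi> = (\<lambda>u. cnj (\<eta> u)) then of_nat (card (runits :: 'a set)) else 0)"
proof (cases "\<chi> = (\<lambda>u. cnj (\<eta> u))")
  case True
  then show ?thesis using mult_char_inverse_iff[OF \<chi> \<eta>] by simp
next
  case False
  then have "\<not> trivial_char (\<lambda>u. \<chi> u * \<eta> u)"
    using mult_char_inverse_iff[OF \<chi> \<eta>] unfolding trivial_char_def by blast
  then show ?thesis using sum_mult_char_eq_0[OF mult_char_mult_char[OF \<chi> \<eta>]] False by simp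
qed

lemma primitive_mult_char_nontrivial:
  fixes \<chi> :: "'a::comm_ring_1 \<Rightarrow> complex"
  assumes "primitive_mult_char \<chi>" shows "\<not> trivial_char \<chi>"
  using assms zero_neq_one unfolding primitive_mult_char_def conductor_def by (metis UNIV_I singletonD)

lemma additive_char_add: "additive_char \<psi> \<Longrightarrow> \<psi> (x + y) = \<psi> x * \<psi> y"
  unfolding additive_char_def by blast

lemma additive_char_zero:
  assumes "additive_char \<psi>" shows "\<psi> 0 = 1"
  using additive_char_add[OF assms, of 0 0] assms unfolding additive_char_def by auto

section \<open>Finite local rings\<close>

definition ann_maxid :: "'a::comm_ring_1 set" where
  "ann_maxid = {x. \<forall>m\<in>maxid. m * x = 0}"

definition trivial_on_ideal :: "('a::comm_ring_1 \<Rightarrow> complex) \<Rightarrow> 'a set \<Rightarrow> bool" where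
  "trivial_on_ideal \<chi> I \<longleftrightarrow> ring_ideal I \<and> I \<subseteq> maxid \<and> (\<forall>x\<in>I. \<chi> (1 + x) = 1)"

definition residue_square :: "'a::comm_ring_1 \<Rightarrow> bool" where
  "residue_square w \<longleftrightarrow> (\<exists>v. w - v * v \<in> maxid)"

locale finite_local_ring =
  fixes ring_type :: "'a::{comm_ring_1, finite} itself"
  assumes local: "local_ring TYPE('a)"
begin

abbreviation M :: "'a set" where "M \<equiv> maxid"
abbreviation U :: "'a set" where "U \<equiv> runits"

lemma maximal_ideal_maxid: "maximal_ideal M"
  using local unfolding local_ring_def maxid_def by (rule theI')

lemma maximal_ideal_eq_maxid: "maximal_ideal (I::'a set) \<Longrightarrow> I = M"
  using local maximal_ideal_maxid unfolding local_ring_def by blast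

lemma ring_ideal_maxid: "ring_ideal M"
  using maximal_ideal_maxid maximal_ideal_def by blast

lemma runit_not_in_maxid: "u \<in> U \<Longrightarrow> u \<notin> M"
  using ring_ideal_runit_eq_UNIV[OF ring_ideal_maxid] maximal_ideal_maxid
  unfolding maximal_ideal_def by blast

lemma nonunit_in_maxid:
  assumes "x \<notin> U" shows "x \<in> M"
proof -
  let ?I0 = "range (\<lambda>r. r * x)"
  let ?P = "{I::'a set. ring_ideal I \<and> I \<noteq> UNIV \<and> ?I0 \<subseteq> I}"
  have "1 \<notin> ?I0" using assms runits_iff by (auto, metis mult.commute)
  then have "?I0 \<in> ?P" using ring_ideal_principal by blast
  then have "\<exists>I\<in>?P. \<forall>J\<in>?P. I \<le> J \<longrightarrow> I = J"
    by (intro finite_has_maximal) auto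
  then obtain I where I: "I \<in> ?P" and Imax: "\<forall>J\<in>?P. I \<le> J \<longrightarrow> I = J" ..
  have "maximal_ideal I"
    unfolding maximal_ideal_def
  proof (intro conjI allI impI)
    show "ring_ideal I" "I \<noteq> UNIV" using I by auto
    fix J assume J: "ring_ideal J \<and> I \<subseteq> J"
    show "J = I \<or> J = UNIV"
    proof (cases "J = UNIV")
      case False
      with J have "J \<in> ?P" using I by auto
      then show ?thesis using Imax J by auto
    qed simp
  qed
  then have "I = M" by (rule maximal_ideal_eq_maxid)
  moreover have "x \<in> I" using I range_eqI[of x "\<lambda>r. r * x" 1] by auto
  ultimately show ?thesis by simp
qed

lemma maxid_iff_nonunit: "x \<in> M \<longleftrightarrow> x \<notin> U"
  using nonunit_in_maxid runit_not_in_maxid by blast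

lemma runit_add_maxid: "u \<in> U \<Longrightarrow> m \<in> M \<Longrightarrow> u + m \<in> U"
  using ring_ideal_diff[OF ring_ideal_maxid, of "u + m" m] maxid_iff_nonunit by auto

lemma runit_mult_maxid_iff:
  assumes "u \<in> U" shows "u * x \<in> M \<longleftrightarrow> x \<in> M"
proof
  assume "u * x \<in> M"
  then have "uinv u * (u * x) \<in> M" by (rule ring_ideal_mult_left[OF ring_ideal_maxid])
  then show "x \<in> M" using runit_left_inverse[OF assms] by (simp add: mult.assoc[symmetric])
qed (rule ring_ideal_mult_left[OF ring_ideal_maxid])

lemma maxid_ne_zero_if_not_field: "\<not> is_field_ring TYPE('a) \<Longrightarrow> M \<noteq> {0}"
  unfolding is_field_ring_def using nonunit_in_maxid unfolding runits_def by blast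

lemma two_runit_if_odd_residue_char:
  assumes "odd (residue_char TYPE('a))" shows "(2::'a) \<in> U"
proof (rule ccontr)
  assume "(2::'a) \<notin> U"
  then have two: "(of_nat 2 :: 'a) \<in> M" using nonunit_in_maxid by simp
  have "residue_char TYPE('a) = 2"
    unfolding residue_char_def
  proof (rule Least_equality)
    fix n :: nat assume n: "0 < n \<and> (of_nat n :: 'a) \<in> M"
    then have "n \<noteq> 1" using runit_not_in_maxid by auto
    with n show "2 \<le> n" by simp
  qed (use two in simp)
  then show False using assms by simp
qed

lemma ring_ideal_ann_maxid: "ring_ideal (ann_maxid :: 'a set)"
  unfolding ring_ideal_def ann_maxid_def by (auto simp: distrib_left mult.left_commute)

lemma ann_maxid_subset_maxid:
  assumes "M \<noteq> {0}" shows "(ann_maxid :: 'a set) \<subseteq> M"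
proof
  fix v :: 'a assume v: "v \<in> ann_maxid"
  obtain m where "m \<in> M" "m \<noteq> 0" using assms ring_ideal_zero[OF ring_ideal_maxid] by blast
  moreover have "v * m = 0" using v \<open>m \<in> M\<close> unfolding ann_maxid_def by (simp add: mult.commute)
  ultimately show "v \<in> M" using runit_mult_eq_0 maxid_iff_nonunit by blast
qed

text \<open>Multiplying a nonzero \<open>x\<close> by some \<open>m \<in> M\<close> with \<open>m x \<noteq> 0\<close> strictly shrinks the principal ideal,
  since \<open>x = r m x\<close> would make the unit \<open>1 - r m\<close> kill \<open>x\<close>.\<close>
lemma ideal_meets_ann_maxid:
  fixes J :: "'a set"
  assumes J: "ring_ideal J" and "x \<in> J" "x \<noteq> 0"
  shows "\<exists>y\<in>J. y \<noteq> 0 \<and> y \<in> ann_maxid"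
  using assms(2,3)
proof (induction "card (range (\<lambda>r. r * x))" arbitrary: x rule: less_induct)
  case less
  show ?case
  proof (cases "x \<in> ann_maxid")
    case False
    then obtain m where m: "m \<in> M" "m * x \<noteq> 0" unfolding ann_maxid_def by blast
    define y where "y = m * x"
    have yJ: "y \<in> J" unfolding y_def using ring_ideal_mult_left[OF J less.prems(1)] .
    have sub: "range (\<lambda>r. r * y) \<subseteq> range (\<lambda>r. r * x)"
      unfolding y_def by (auto simp: mult.assoc[symmetric])
    have notin: "x \<notin> range (\<lambda>r. r * y)"
    proof
      assume "x \<in> range (\<lambda>r. r * y)"
      then obtain r where r: "x = r * y" by blast
      have "- (r * m) \<in> M"
        using ring_ideal_uminus[OF ring_ideal_maxid ring_ideal_mult_left[OF ring_ideal_maxid m(1)]] .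
      then have u: "1 + - (r * m) \<in> U" using runit_add_maxid[OF one_runits] by blast
      have "(1 + - (r * m)) * x = 0" using r unfolding y_def by (simp add: algebra_simps)
      then show False using runit_mult_eq_0[OF u] less.prems(2) by blast
    qed
    have "x \<in> range (\<lambda>r. r * x)" by (rule range_eqI[of _ _ 1]) simp
    then have "card (range (\<lambda>r. r * y)) < card (range (\<lambda>r. r * x))"
      using sub notin by (intro psubset_card_mono) auto
    then show ?thesis using less.hyps[OF _ yJ] m(2) unfolding y_def by blast
  qed (use less.prems in blast)
qed

lemma ann_maxid_ne_zero: "(ann_maxid :: 'a set) \<noteq> {0}"
  using ideal_meets_ann_maxid[OF ring_ideal_UNIV, of 1] by auto

lemma annihilates_ann_maxid_iff: "(\<forall>y\<in>ann_maxid. c * y = 0) \<longleftrightarrow> c \<in> M"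
proof
  assume "\<forall>y\<in>ann_maxid. c * y = 0"
  moreover obtain y :: 'a where "y \<in> ann_maxid" "y \<noteq> 0"
    using ann_maxid_ne_zero ring_ideal_zero[OF ring_ideal_ann_maxid] by blast
  ultimately show "c \<in> M" using runit_mult_eq_0 maxid_iff_nonunit by blast
qed (simp add: ann_maxid_def)

lemma card_ann_maxid_coset:
  assumes a: "a \<in> U" and M: "M \<noteq> {0}"
  shows "card {z\<in>U. 1 - a * uinv z \<in> ann_maxid} = card (ann_maxid :: 'a set)"
proof (rule bij_betw_same_card[of "\<lambda>z. 1 - a * uinv z"],
    rule bij_betw_byWitness[where f' = "\<lambda>s. a * uinv (1 - s)"])
  have unit: "1 - s \<in> U" if "s \<in> ann_maxid" for s
    using runit_add_maxid[OF one_runits ring_ideal_uminus[OF ring_ideal_maxid]] that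
      ann_maxid_subset_maxid[OF M] by auto
  have inv: "1 - a * uinv (a * uinv (1 - s)) = s" if "s \<in> ann_maxid" for s
  proof -
    have "uinv (a * uinv (1 - s)) = uinv a * (1 - s)"
      using uinv_mult_distrib[OF a uinv_runits[OF unit[OF that]]] uinv_uinv[OF unit[OF that]] by simp
    then show ?thesis using runit_right_inverse[OF a] by (simp add: mult.assoc[symmetric])
  qed
  show "\<forall>z\<in>{z\<in>U. 1 - a * uinv z \<in> ann_maxid}. a * uinv (1 - (1 - a * uinv z)) = z"
  proof
    fix z assume "z \<in> {z\<in>U. 1 - a * uinv z \<in> ann_maxid}"
    then have z: "z \<in> U" by simp
    have "a * uinv (a * uinv z) = a * (uinv a * z)"
      using uinv_mult_distrib[OF a uinv_runits[OF z]] uinv_uinv[OF z] by simp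
    then show "a * uinv (1 - (1 - a * uinv z)) = z"
      using runit_right_inverse[OF a] by (simp add: mult.assoc[symmetric])
  qed
  show "\<forall>s\<in>ann_maxid. 1 - a * uinv (a * uinv (1 - s)) = s" using inv by blast
  show "(\<lambda>z. 1 - a * uinv z) ` {z\<in>U. 1 - a * uinv z \<in> ann_maxid} \<subseteq> ann_maxid" by auto
  show "(\<lambda>s. a * uinv (1 - s)) ` ann_maxid \<subseteq> {z\<in>U. 1 - a * uinv z \<in> ann_maxid}"
    using inv mult_runits[OF a uinv_runits[OF unit]] by auto
qed

text \<open>\<open>1 + (i + j) = (1 + i) (1 + j/(1 + i))\<close>.\<close>
lemma trivial_on_ideal_sum:
  fixes \<chi> :: "'a \<Rightarrow> complex" and I J :: "'a set"
  assumes \<chi>: "mult_char \<chi>" and I: "trivial_on_ideal \<chi> I" and J: "trivial_on_ideal \<chi> J"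
  shows "trivial_on_ideal \<chi> {i + j |i j. i \<in> I \<and> j \<in> J}"
  unfolding trivial_on_ideal_def
proof (intro conjI ballI)
  have I': "ring_ideal I" "I \<subseteq> M" and J': "ring_ideal J" "J \<subseteq> M"
    using I J unfolding trivial_on_ideal_def by auto
  show "ring_ideal {i + j |i j. i \<in> I \<and> j \<in> J}" using ring_ideal_sum[OF I'(1) J'(1)] .
  show "{i + j |i j. i \<in> I \<and> j \<in> J} \<subseteq> M"
    using I' J' ring_ideal_add[OF ring_ideal_maxid] by blast
  fix x assume "x \<in> {i + j |i j. i \<in> I \<and> j \<in> J}"
  then obtain i j where x: "x = i + j" "i \<in> I" "j \<in> J" by blast
  have u1: "1 + i \<in> U" using runit_add_maxid x(2) I' by auto
  define w where "w = uinv (1 + i)"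
  have wj: "w * j \<in> J" using ring_ideal_mult_left[OF J'(1) x(3)] .
  have u2: "1 + w * j \<in> U" using runit_add_maxid wj J' by auto
  have "(1 + i) * (1 + w * j) = 1 + i + ((1 + i) * w) * j" by (simp add: algebra_simps)
  also have "\<dots> = 1 + x" using runit_right_inverse[OF u1] x(1) unfolding w_def by simp
  finally have "\<chi> (1 + x) = \<chi> (1 + i) * \<chi> (1 + w * j)" using mult_char_mult[OF \<chi> u1 u2] by simp
  also have "\<dots> = 1" using I J x(2) wj unfolding trivial_on_ideal_def by simp
  finally show "\<chi> (1 + x) = 1" .
qed

lemma conductor_greatest:
  fixes \<chi> :: "'a \<Rightarrow> complex"
  assumes \<chi>: "mult_char \<chi>" and nontriv: "\<not> trivial_char \<chi>"
  shows "trivial_on_ideal \<chi> (conductor \<chi>)" "trivial_on_ideal \<chi> J \<Longrightarrow> J \<subseteq> conductor \<chi>"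
proof -
  let ?G = "{I. trivial_on_ideal \<chi> I}"
  have "{0::'a} \<in> ?G"
    unfolding trivial_on_ideal_def ring_ideal_def
    using ring_ideal_zero[OF ring_ideal_maxid] mult_char_one[OF \<chi>] by auto
  then have "\<exists>G\<in>?G. \<forall>J\<in>?G. G \<le> J \<longrightarrow> G = J"
    by (intro finite_has_maximal) auto
  then obtain G where G': "G \<in> ?G" and Gmax: "\<forall>J\<in>?G. G \<le> J \<longrightarrow> G = J" ..
  from G' have G: "trivial_on_ideal \<chi> G" by simp
  have greatest: "J \<subseteq> G" if J: "trivial_on_ideal \<chi> J" for J
  proof -
    let ?S = "{i + j |i j. i \<in> G \<and> j \<in> J}"
    have "G \<subseteq> ?S" using ring_ideal_zero[of J] J unfolding trivial_on_ideal_def by force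
    moreover have "J \<subseteq> ?S" using ring_ideal_zero[of G] G unfolding trivial_on_ideal_def by force
    ultimately show "J \<subseteq> G" using Gmax trivial_on_ideal_sum[OF \<chi> G J] by blast
  qed
  have "conductor \<chi> = (THE I. trivial_on_ideal \<chi> I \<and> (\<forall>J. trivial_on_ideal \<chi> J \<longrightarrow> J \<subseteq> I))"
    using nontriv unfolding conductor_def trivial_on_ideal_def by simp
  also have "\<dots> = G"
  proof (rule the_equality)
    show "trivial_on_ideal \<chi> G \<and> (\<forall>J. trivial_on_ideal \<chi> J \<longrightarrow> J \<subseteq> G)"
      using G greatest by simp
    fix I assume "trivial_on_ideal \<chi> I \<and> (\<forall>J. trivial_on_ideal \<chi> J \<longrightarrow> J \<subseteq> I)"
    then show "I = G" using G greatest by (simp add: subset_antisym)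
  qed
  finally show "trivial_on_ideal \<chi> (conductor \<chi>)" "trivial_on_ideal \<chi> J \<Longrightarrow> J \<subseteq> conductor \<chi>"
    using G greatest by simp_all
qed

lemma primitive_mult_char_iff_field:
  fixes \<chi> :: "'a \<Rightarrow> complex"
  assumes "M = {0}" "mult_char \<chi>"
  shows "primitive_mult_char \<chi> \<longleftrightarrow> \<not> trivial_char \<chi>"
proof
  assume "\<not> trivial_char \<chi>"
  then have "ring_ideal (conductor \<chi>)" "conductor \<chi> \<subseteq> {0}"
    using conductor_greatest(1)[OF assms(2)] assms(1) unfolding trivial_on_ideal_def by auto
  then show "primitive_mult_char \<chi>" unfolding primitive_mult_char_def using ring_ideal_zero by blast
qed (rule primitive_mult_char_nontrivial)

lemma residue_square_cong:
  assumes "a - z \<in> M" shows "residue_square a \<longleftrightarrow> residue_square z"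
proof -
  have "a - v * v \<in> M \<longleftrightarrow> z - v * v \<in> M" for v
    using ring_ideal_diff[OF ring_ideal_maxid _ assms, of "a - v * v"]
      ring_ideal_add[OF ring_ideal_maxid _ assms, of "z - v * v"] by auto
  then show ?thesis unfolding residue_square_def by blast
qed

lemma residue_square_square: "residue_square ((x::'a) * x)"
  unfolding residue_square_def using ring_ideal_zero[OF ring_ideal_maxid] by (intro exI[of _ x]) simp

lemma square_runit_iff: "(x::'a) * x \<in> U \<longleftrightarrow> x \<in> U"
  using ring_ideal_mult_right[OF ring_ideal_maxid] mult_runits maxid_iff_nonunit by blast

end

section \<open>Frobenius local rings\<close>

definition twisted_gauss_sum :: "('a::comm_ring_1 \<Rightarrow> complex) \<Rightarrow> ('a \<Rightarrow> complex) \<Rightarrow> 'a \<Rightarrow> complex" where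
  "twisted_gauss_sum \<psi> \<gamma> b = (\<Sum>u\<in>runits. \<gamma> u * \<psi> (u * b))"

lemma twisted_gauss_sum_runit:
  fixes \<gamma> :: "'a::{comm_ring_1,finite} \<Rightarrow> complex"
  assumes \<gamma>: "mult_char \<gamma>" and b: "b \<in> runits"
  shows "twisted_gauss_sum \<psi> \<gamma> b = \<gamma> (uinv b) * gauss_sum \<psi> \<gamma>"
proof -
  have bi: "uinv b \<in> runits" using uinv_runits[OF b] .
  have "twisted_gauss_sum \<psi> \<gamma> b = (\<Sum>u\<in>runits. \<gamma> (uinv b * u) * \<psi> ((uinv b * u) * b))"
    unfolding twisted_gauss_sum_def
    using sum_runits_reindex_mult[OF bi, of "\<lambda>u. \<gamma> u * \<psi> (u * b)"] by simp
  also have "\<dots> = (\<Sum>u\<in>runits. \<gamma> (uinv b) * (\<psi> u * \<gamma> u))"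
    using runit_left_inverse[OF b] mult_char_mult[OF \<gamma> bi]
    by (intro sum.cong) (simp_all add: mult.commute mult.left_commute)
  finally show ?thesis unfolding gauss_sum_def by (simp add: sum_distrib_left)
qed

locale frobenius_local_ring = finite_local_ring ring_type
  for ring_type :: "'a::{comm_ring_1,finite} itself" +
  fixes \<psi> :: "'a \<Rightarrow> complex"
  assumes primitive: "primitive_additive_char \<psi>"
begin

lemma psi_add: "\<psi> (x + y) = \<psi> x * \<psi> y"
  using primitive additive_char_add unfolding primitive_additive_char_def by blast

lemma psi_zero: "\<psi> 0 = 1"
  using primitive additive_char_zero unfolding primitive_additive_char_def by blast

lemma sum_psi_ideal:
  assumes I: "ring_ideal I"
  shows "(\<Sum>y\<in>I. \<psi> (c * y)) = (if \<forall>y\<in>I. c * y = 0 then of_nat (card I) else 0)"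
proof (cases "\<forall>y\<in>I. c * y = 0")
  case False
  then have "(\<lambda>y. c * y) ` I \<noteq> {0}" by auto
  then obtain y0 where y0: "y0 \<in> I" "\<psi> (c * y0) \<noteq> 1"
    using primitive ring_ideal_image_mult[OF I] unfolding primitive_additive_char_def by blast
  have "(\<Sum>y\<in>I. \<psi> (c * y)) = (\<Sum>y\<in>I. \<psi> (c * (y + y0)))"
  proof (rule sum.reindex_bij_witness[where j = "\<lambda>y. y - y0" and i = "\<lambda>y. y + y0"])
    show "a - y0 \<in> I" if "a \<in> I" for a using ring_ideal_diff[OF I that y0(1)] .
    show "b + y0 \<in> I" if "b \<in> I" for b using ring_ideal_add[OF I that y0(1)] .
  qed simp_all
  also have "\<dots> = \<psi> (c * y0) * (\<Sum>y\<in>I. \<psi> (c * y))"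
    by (simp add: distrib_left psi_add sum_distrib_left mult.commute)
  finally have "(1 - \<psi> (c * y0)) * (\<Sum>y\<in>I. \<psi> (c * y)) = 0" by (simp add: algebra_simps)
  then show ?thesis using y0(2) unfolding if_not_P[OF False] by simp
qed (simp add: psi_zero)

text \<open>Double counting of \<open>\<Sum>c \<Sum>s\<in>W. \<psi> (c * s)\<close>: summing over \<open>s\<close> first leaves only
  the terms with \<open>c \<in> M\<close>, summing over \<open>c\<close> first only the term \<open>s = 0\<close>.\<close>
lemma card_ideal_mult_card_maxid:
  fixes W :: "'a set"
  assumes W: "ring_ideal W" "W \<subseteq> ann_maxid" "W \<noteq> {0}"
  shows "card W * card M = card (UNIV :: 'a set)"
proof -
  have inner: "(\<Sum>s\<in>W. \<psi> (c * s)) = (if c \<in> M then of_nat (card W) else 0)" for c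
  proof (cases "c \<in> M")
    case True
    then have "\<forall>s\<in>W. c * s = 0" using W(2) unfolding ann_maxid_def by blast
    then show ?thesis using sum_psi_ideal[OF W(1), of c] True by simp
  next
    case False
    obtain s where "s \<in> W" "s \<noteq> 0" using W(3) ring_ideal_zero[OF W(1)] by blast
    then have nonzero: "\<not> (\<forall>s\<in>W. c * s = 0)" using runit_mult_eq_0 False maxid_iff_nonunit by blast
    show ?thesis unfolding sum_psi_ideal[OF W(1), of c] if_not_P[OF nonzero] if_not_P[OF False] ..
  qed
  have "of_nat (card M * card W) = (\<Sum>c\<in>UNIV. if c \<in> M then of_nat (card W) else (0::complex))"
    by (simp add: sum.If_cases)
  also have "\<dots> = (\<Sum>c\<in>UNIV. \<Sum>s\<in>W. \<psi> (c * s))" using inner by simp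
  also have "\<dots> = (\<Sum>s\<in>W. \<Sum>c\<in>UNIV. \<psi> (s * c))"
    by (subst sum.swap) (simp add: mult.commute)
  also have "\<dots> = (\<Sum>s\<in>W. if s = 0 then of_nat (card (UNIV :: 'a set)) else 0)"
  proof (rule sum.cong[OF refl])
    fix s :: 'a
    have "(\<forall>c\<in>UNIV. s * c = 0) \<longleftrightarrow> s = 0" by (metis mult_1_right mult_zero_left UNIV_I)
    then show "(\<Sum>c\<in>UNIV. \<psi> (s * c)) = (if s = 0 then of_nat (card (UNIV :: 'a set)) else 0)"
      using sum_psi_ideal[OF ring_ideal_UNIV, of s] by simp
  qed
  also have "\<dots> = of_nat (card (UNIV :: 'a set))" using ring_ideal_zero[OF W(1)] by (simp add: sum.delta)
  finally show ?thesis by (simp only: of_nat_eq_iff mult.commute)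
qed

lemma sum_psi_maxid: "(\<Sum>y\<in>M. \<psi> (c * y)) = (if c \<in> ann_maxid then of_nat (card M) else 0)"
proof -
  have "(\<forall>y\<in>M. c * y = 0) \<longleftrightarrow> c \<in> ann_maxid" unfolding ann_maxid_def by (auto simp: mult.commute)
  then show ?thesis unfolding sum_psi_ideal[OF ring_ideal_maxid] by simp
qed

lemma card_ann_maxid_mult_card_maxid: "card (ann_maxid :: 'a set) * card M = card (UNIV :: 'a set)"
  using card_ideal_mult_card_maxid[OF ring_ideal_ann_maxid order_refl ann_maxid_ne_zero] .

text \<open>All nonzero ideals inside \<open>ann_maxid\<close> have \<open>|R|/|M|\<close> elements, so the one generated by a
  nonzero element of \<open>J \<inter> ann_maxid\<close> is all of \<open>ann_maxid\<close>.\<close>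
lemma ann_maxid_subset_ideal:
  fixes J :: "'a set"
  assumes J: "ring_ideal J" "J \<noteq> {0}"
  shows "ann_maxid \<subseteq> J"
proof -
  obtain x where "x \<in> J" "x \<noteq> 0" using J ring_ideal_zero[OF J(1)] by blast
  then obtain y where y: "y \<in> J" "y \<noteq> 0" "y \<in> ann_maxid" using ideal_meets_ann_maxid[OF J(1)] by blast
  let ?W = "range (\<lambda>r. r * y)"
  have W: "ring_ideal ?W" by (rule ring_ideal_principal)
  have W_ann: "?W \<subseteq> ann_maxid" using y(3) unfolding ann_maxid_def by (auto simp: mult.left_commute)
  have "y \<in> ?W" by (rule range_eqI[of _ _ 1]) simp
  then have "?W \<noteq> {0}" using y(2) by blast
  then have "card ?W * card M = card (ann_maxid :: 'a set) * card M"
    using card_ideal_mult_card_maxid[OF W W_ann] card_ann_maxid_mult_card_maxid by simp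
  moreover have "card M \<noteq> 0" using ring_ideal_zero[OF ring_ideal_maxid] by auto
  ultimately have "card ?W = card (ann_maxid :: 'a set)" by simp
  then have "?W = ann_maxid" using W_ann by (intro card_subset_eq) simp_all
  moreover have "?W \<subseteq> J" using ring_ideal_mult_left[OF J(1) y(1)] by blast
  ultimately show ?thesis by simp
qed

lemma primitive_mult_char_iff_ann_maxid:
  fixes \<chi> :: "'a \<Rightarrow> complex"
  assumes M: "M \<noteq> {0}" and \<chi>: "mult_char \<chi>"
  shows "primitive_mult_char \<chi> \<longleftrightarrow> (\<exists>v\<in>ann_maxid. \<chi> (1 + v) \<noteq> 1)"
proof
  assume prim: "primitive_mult_char \<chi>"
  show "\<exists>v\<in>ann_maxid. \<chi> (1 + v) \<noteq> 1"
  proof (rule ccontr)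
    assume "\<not> ?thesis"
    then have "trivial_on_ideal \<chi> ann_maxid"
      unfolding trivial_on_ideal_def using ring_ideal_ann_maxid ann_maxid_subset_maxid[OF M] by blast
    then have "ann_maxid \<subseteq> conductor \<chi>"
      using conductor_greatest(2)[OF \<chi> primitive_mult_char_nontrivial[OF prim]] by blast
    then show False
      using prim ann_maxid_ne_zero ring_ideal_zero[OF ring_ideal_ann_maxid]
      unfolding primitive_mult_char_def by blast
  qed
next
  assume "\<exists>v\<in>ann_maxid. \<chi> (1 + v) \<noteq> 1"
  then obtain v where v: "v \<in> ann_maxid" "\<chi> (1 + v) \<noteq> 1" ..
  show "primitive_mult_char \<chi>"
  proof (rule ccontr)
    assume nonprim: "\<not> primitive_mult_char \<chi>"
    show False
    proof (cases "trivial_char \<chi>")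
      case True
      have "1 + v \<in> U"
        using v(1) ann_maxid_subset_maxid[OF M] runit_add_maxid[OF one_runits] by blast
      then show False using True v(2) unfolding trivial_char_def by blast
    next
      case False
      have "ring_ideal (conductor \<chi>)" "conductor \<chi> \<noteq> {0}"
        using conductor_greatest(1)[OF \<chi> False] nonprim
        unfolding trivial_on_ideal_def primitive_mult_char_def by auto
      then have "v \<in> conductor \<chi>" using ann_maxid_subset_ideal v(1) by blast
      then show False using conductor_greatest(1)[OF \<chi> False] v(2)
        unfolding trivial_on_ideal_def by blast
    qed
  qed
qed

lemma primitive_mult_char_mult_nonprimitive:
  fixes \<chi> \<tau> :: "'a \<Rightarrow> complex"
  assumes \<chi>: "mult_char \<chi>" "primitive_mult_char \<chi>"
    and \<tau>: "mult_char \<tau>" "\<not> primitive_mult_char \<tau>"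
  shows "primitive_mult_char (\<lambda>u. \<chi> u * \<tau> u)"
proof (cases "M = {0}")
  case True
  then have "trivial_char \<tau>" "\<not> trivial_char \<chi>"
    using primitive_mult_char_iff_field[OF True] \<chi> \<tau> by blast+
  then have "\<not> trivial_char (\<lambda>u. \<chi> u * \<tau> u)" unfolding trivial_char_def by auto
  then show ?thesis
    using primitive_mult_char_iff_field[OF True mult_char_mult_char[OF \<chi>(1) \<tau>(1)]] by blast
next
  case False
  then show ?thesis
    using primitive_mult_char_iff_ann_maxid[OF False] \<chi> \<tau> mult_char_mult_char[OF \<chi>(1) \<tau>(1)] by auto
qed

text \<open>For \<open>b \<in> M - {0}\<close> the sum is invariant under \<open>u \<mapsto> (1 + v) u\<close> with \<open>v \<in> ann_maxid\<close>,
  because \<open>v b = 0\<close>, while \<open>\<gamma>\<close> changes by the factor \<open>\<gamma> (1 + v)\<close>.\<close>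
lemma twisted_gauss_sum_nonunit:
  fixes \<gamma> :: "'a \<Rightarrow> complex"
  assumes \<gamma>: "mult_char \<gamma>" "primitive_mult_char \<gamma>" and b: "b \<notin> U"
  shows "twisted_gauss_sum \<psi> \<gamma> b = 0"
proof (cases "b = 0")
  case True
  then show ?thesis
    using sum_mult_char_eq_0[OF \<gamma>(1) primitive_mult_char_nontrivial[OF \<gamma>(2)]]
    by (simp add: twisted_gauss_sum_def psi_zero)
next
  case False
  have bM: "b \<in> M" using b nonunit_in_maxid by blast
  then have M: "M \<noteq> {0}" using False by blast
  then obtain v where v: "v \<in> ann_maxid" "\<gamma> (1 + v) \<noteq> 1"
    using primitive_mult_char_iff_ann_maxid \<gamma> by blast
  have c: "1 + v \<in> U"
    using v(1) ann_maxid_subset_maxid[OF M] runit_add_maxid[OF one_runits] by blast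
  have vb: "b * v = 0" using v(1) bM unfolding ann_maxid_def by blast
  let ?S = "twisted_gauss_sum \<psi> \<gamma> b"
  have "?S = (\<Sum>u\<in>U. \<gamma> ((1 + v) * u) * \<psi> (((1 + v) * u) * b))"
    unfolding twisted_gauss_sum_def
    using sum_runits_reindex_mult[OF c, of "\<lambda>u. \<gamma> u * \<psi> (u * b)"] by simp
  also have "\<dots> = (\<Sum>u\<in>U. \<gamma> (1 + v) * (\<gamma> u * \<psi> (u * b)))"
  proof (rule sum.cong[OF refl])
    fix u assume u: "u \<in> U"
    have "((1 + v) * u) * b = u * b + u * (b * v)" by (simp add: algebra_simps)
    then have "((1 + v) * u) * b = u * b" using vb by simp
    then show "\<gamma> ((1 + v) * u) * \<psi> (((1 + v) * u) * b) = \<gamma> (1 + v) * (\<gamma> u * \<psi> (u * b))"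
      using mult_char_mult[OF \<gamma>(1) c u] by simp
  qed
  also have "\<dots> = \<gamma> (1 + v) * ?S" by (simp add: twisted_gauss_sum_def sum_distrib_left)
  finally have "(1 - \<gamma> (1 + v)) * ?S = 0" by (simp add: algebra_simps)
  then show ?thesis using v(2) by simp
qed

lemma twisted_gauss_sum_primitive:
  fixes \<gamma> :: "'a \<Rightarrow> complex"
  assumes "mult_char \<gamma>" "primitive_mult_char \<gamma>"
  shows "twisted_gauss_sum \<psi> \<gamma> b = (if b \<in> U then \<gamma> (uinv b) * gauss_sum \<psi> \<gamma> else 0)"
  using twisted_gauss_sum_runit[OF assms(1)] twisted_gauss_sum_nonunit[OF assms] by simp

end

section \<open>The moment for primitive characters\<close>

text \<open>Substituting \<open>a = u v x\<close> in the \<open>(u, v)\<close>-term of the expanded square \<open>\<chi>(a) K(a)\<^sup>2\<close>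
  turns \<open>\<psi>(u + a/u) \<psi>(v + a/v)\<close> into \<open>\<psi>(u (1 + x)) \<psi>(v (1 + x))\<close>.\<close>
lemma sum_mult_char_kloosterman_sq:
  fixes \<psi> \<chi> \<tau> :: "'a::{comm_ring_1,finite} \<Rightarrow> complex"
  assumes \<psi>: "additive_char \<psi>" and \<chi>: "mult_char \<chi>"
  shows "(\<Sum>a\<in>runits. \<chi> a * (kloosterman \<psi> \<tau> a)\<^sup>2) =
    (\<Sum>x\<in>runits. \<chi> x * (twisted_gauss_sum \<psi> (\<lambda>u. \<chi> u * \<tau> u) (1 + x))\<^sup>2)"
proof -
  define \<gamma> where "\<gamma> = (\<lambda>u. \<chi> u * \<tau> u)"
  define f where "f = (\<lambda>a u v. \<chi> a * ((\<tau> u * \<psi> (u + a * uinv u)) * (\<tau> v * \<psi> (v + a * uinv v))))"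
  define g where "g = (\<lambda>x u v. \<chi> x * ((\<gamma> u * \<psi> (u * (1 + x))) * (\<gamma> v * \<psi> (v * (1 + x)))))"
  have substitution: "(\<Sum>a\<in>runits. f a u v) = (\<Sum>x\<in>runits. g x u v)"
    if u: "u \<in> runits" and v: "v \<in> runits" for u v
  proof -
    have uv: "u * v \<in> runits" using mult_runits[OF u v] .
    have "(\<Sum>a\<in>runits. f a u v) = (\<Sum>x\<in>runits. f ((u * v) * x) u v)"
      using sum_runits_reindex_mult[OF uv, of "\<lambda>a. f a u v"] by simp
    also have "\<dots> = (\<Sum>x\<in>runits. g x u v)"
    proof (rule sum.cong[OF refl])
      fix x :: 'a assume x: "x \<in> runits"
      have "((u * v) * x) * uinv u = v * x" "((u * v) * x) * uinv v = u * x"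
        using runit_right_inverse[OF u] runit_right_inverse[OF v]
        by (metis mult.assoc mult.commute mult_1_right)+
      moreover have "\<psi> (u + v * x) * \<psi> (v + u * x) = \<psi> (u * (1 + x)) * \<psi> (v * (1 + x))"
        using additive_char_add[OF \<psi>, of "u + v * x" "v + u * x"]
          additive_char_add[OF \<psi>, of "u * (1 + x)" "v * (1 + x)"]
        by (simp add: algebra_simps)
      moreover have "\<chi> ((u * v) * x) = \<chi> u * \<chi> v * \<chi> x"
        using mult_char_mult[OF \<chi> uv x] mult_char_mult[OF \<chi> u v] by simp
      ultimately show "f ((u * v) * x) u v = g x u v"
        unfolding f_def g_def \<gamma>_def by (simp add: ac_simps)
    qed
    finally show ?thesis .
  qed
  have "(\<Sum>a\<in>runits. \<chi> a * (kloosterman \<psi> \<tau> a)\<^sup>2) = (\<Sum>a\<in>runits. \<Sum>u\<in>runits. \<Sum>v\<in>runits. f a u v)"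
    unfolding kloosterman_def power2_eq_square f_def
    by (subst sum_product, subst sum_distrib_left, subst sum_distrib_left, rule refl)
  also have "\<dots> = (\<Sum>u\<in>runits. \<Sum>v\<in>runits. \<Sum>a\<in>runits. f a u v)"
    by (rule trans[OF sum.swap], rule sum.cong[OF refl], rule sum.swap)
  also have "\<dots> = (\<Sum>u\<in>runits. \<Sum>v\<in>runits. \<Sum>x\<in>runits. g x u v)"
    by (simp add: substitution)
  also have "\<dots> = (\<Sum>x\<in>runits. \<Sum>u\<in>runits. \<Sum>v\<in>runits. g x u v)"
    by (rule trans[OF sum.cong[OF refl]], rule sum.swap, rule sum.swap)
  also have "\<dots> = (\<Sum>x\<in>runits. \<chi> x * (twisted_gauss_sum \<psi> \<gamma> (1 + x))\<^sup>2)"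
    unfolding twisted_gauss_sum_def power2_eq_square g_def
    by (subst sum_product, subst sum_distrib_left, subst sum_distrib_left, rule refl)
  finally show ?thesis unfolding \<gamma>_def .
qed

text \<open>The pairs \<open>(u, v)\<close> with \<open>u + v = 1\<close> are parametrised by \<open>x = u/v\<close>, via \<open>v = 1/(1 + x)\<close>.\<close>
lemma jacobi_sum_reindex:
  fixes \<chi> \<eta> :: "'a::{comm_ring_1,finite} \<Rightarrow> complex"
  assumes \<chi>: "mult_char \<chi>"
  shows "jacobi_sum \<chi> \<eta> =
    (\<Sum>x\<in>{x\<in>runits. 1 + x \<in> runits}. \<chi> x * (\<chi> (uinv (1 + x)) * \<eta> (uinv (1 + x))))"
  unfolding jacobi_sum_def
proof (rule sym, rule sum.reindex_bij_witness[where j = "\<lambda>x. (x * uinv (1 + x), uinv (1 + x))"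
      and i = "\<lambda>(u, v). u * uinv v"])
  fix x assume "x \<in> {x \<in> runits. 1 + (x::'a) \<in> runits}"
  then have x: "x \<in> runits" and x1: "1 + x \<in> runits" by auto
  define w where "w = uinv (1 + x)"
  have w: "w \<in> runits" "w * (1 + x) = 1"
    unfolding w_def using uinv_runits[OF x1] runit_left_inverse[OF x1] by auto
  show "(case (x * uinv (1 + x), uinv (1 + x)) of (u, v) \<Rightarrow> u * uinv v) = x"
    using uinv_uinv[OF x1] w unfolding w_def[symmetric] by (simp add: mult.assoc)
  have "x * w + w = 1" using w(2) by (simp add: algebra_simps)
  then show "(x * uinv (1 + x), uinv (1 + x)) \<in> {(u, v). u \<in> runits \<and> v \<in> runits \<and> u + v = 1}"
    using mult_runits[OF x w(1)] w(1) unfolding w_def by simp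
  show "(case (x * uinv (1 + x), uinv (1 + x)) of (u, v) \<Rightarrow> \<chi> u * \<eta> v) =
      \<chi> x * (\<chi> (uinv (1 + x)) * \<eta> (uinv (1 + x)))"
    using mult_char_mult[OF \<chi> x w(1)] unfolding w_def by simp
next
  fix b assume "b \<in> {(u, v). u \<in> runits \<and> v \<in> runits \<and> u + v = (1::'a)}"
  then obtain u v where b: "b = (u, v)" and u: "u \<in> runits" and v: "v \<in> runits" and uv: "u + v = 1"
    by blast
  have "1 + u * uinv v = (v + u) * uinv v" using runit_right_inverse[OF v] by (simp add: algebra_simps)
  then have e: "1 + u * uinv v = uinv v" using uv by (simp add: add.commute)
  show "((case b of (u, v) \<Rightarrow> u * uinv v) * uinv (1 + (case b of (u, v) \<Rightarrow> u * uinv v)),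
         uinv (1 + (case b of (u, v) \<Rightarrow> u * uinv v))) = b"
    unfolding b using e uinv_uinv[OF v] runit_left_inverse[OF v] by (simp add: mult.assoc)
  show "(case b of (u, v) \<Rightarrow> u * uinv v) \<in> {x \<in> runits. 1 + x \<in> runits}"
    unfolding b using e mult_runits[OF u uinv_runits[OF v]] uinv_runits[OF v] by simp
qed

context frobenius_local_ring
begin

lemma sum_mult_char_kloosterman_sq_primitive:
  fixes \<chi> \<tau> :: "'a \<Rightarrow> complex"
  assumes \<chi>: "mult_char \<chi>" "primitive_mult_char \<chi>"
    and \<tau>: "mult_char \<tau>" "\<not> primitive_mult_char \<tau>"
  shows "(\<Sum>a\<in>U. \<chi> a * (kloosterman \<psi> \<tau> a)\<^sup>2) =
    jacobi_sum \<chi> (\<lambda>u. \<chi> u * (\<tau> u)\<^sup>2) * (gauss_sum \<psi> (\<lambda>u. \<chi> u * \<tau> u))\<^sup>2"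
proof -
  define \<gamma> where "\<gamma> = (\<lambda>u. \<chi> u * \<tau> u)"
  have \<gamma>: "mult_char \<gamma>" "primitive_mult_char \<gamma>"
    unfolding \<gamma>_def using mult_char_mult_char[OF \<chi>(1) \<tau>(1)]
      primitive_mult_char_mult_nonprimitive[OF \<chi> \<tau>] by auto
  have additive: "additive_char \<psi>" using primitive unfolding primitive_additive_char_def by blast
  have "(\<Sum>a\<in>U. \<chi> a * (kloosterman \<psi> \<tau> a)\<^sup>2) = (\<Sum>x\<in>U. \<chi> x * (twisted_gauss_sum \<psi> \<gamma> (1 + x))\<^sup>2)"
    unfolding \<gamma>_def by (rule sum_mult_char_kloosterman_sq[OF additive \<chi>(1)])
  also have "\<dots> = (\<Sum>x\<in>U. if 1 + x \<in> U then \<chi> x * (\<gamma> (uinv (1 + x)))\<^sup>2 * (gauss_sum \<psi> \<gamma>)\<^sup>2 else 0)"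
    by (rule sum.cong[OF refl]) (simp add: twisted_gauss_sum_primitive[OF \<gamma>] power_mult_distrib)
  also have "\<dots> = (\<Sum>x\<in>{x\<in>U. 1 + x \<in> U}. \<chi> x * (\<gamma> (uinv (1 + x)))\<^sup>2) * (gauss_sum \<psi> \<gamma>)\<^sup>2"
    by (simp add: sum.inter_filter[symmetric] sum_distrib_right)
  also have "(\<Sum>x\<in>{x\<in>U. 1 + x \<in> U}. \<chi> x * (\<gamma> (uinv (1 + x)))\<^sup>2) = jacobi_sum \<chi> (\<lambda>u. \<chi> u * (\<tau> u)\<^sup>2)"
    unfolding jacobi_sum_reindex[OF \<chi>(1)] \<gamma>_def by (simp add: power2_eq_square ac_simps)
  finally show ?thesis unfolding \<gamma>_def .
qed

end

section \<open>Squares in odd residue characteristic\<close>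

locale odd_local_ring = finite_local_ring ring_type
  for ring_type :: "'a::{comm_ring_1,finite} itself" +
  assumes two_runit: "(2::'a) \<in> runits"
begin

lemma square_eq_one: assumes "x * x = (1::'a)" shows "x = 1 \<or> x = -1"
proof -
  have e: "(x - 1) * (x + 1) = 0" using assms by (simp add: algebra_simps)
  have "(x + 1) - (x - 1) \<notin> M" using two_runit runit_not_in_maxid by simp
  then have "x - 1 \<in> U \<or> x + 1 \<in> U"
    using ring_ideal_diff[OF ring_ideal_maxid] maxid_iff_nonunit by blast
  then have "x + 1 = 0 \<or> x - 1 = 0"
    using runit_mult_eq_0[of "x - 1" "x + 1"] runit_mult_eq_0[of "x + 1" "x - 1"] e
    by (auto simp: mult.commute)
  then show ?thesis by (auto simp: eq_neg_iff_add_eq_0)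
qed

text \<open>Squaring is injective on \<open>1 + M\<close>, since \<open>s + t \<in> 2 + M\<close> is a unit there;
  being a self-map of a finite set, it is onto.\<close>
lemma exists_sqrt_one_plus_maxid:
  assumes "m \<in> M" shows "\<exists>s. s * s = 1 + m"
proof -
  let ?P = "{t::'a. t - 1 \<in> M}"
  have sub: "(\<lambda>t. t * t) ` ?P \<subseteq> ?P"
  proof
    fix y assume "y \<in> (\<lambda>t. t * t) ` ?P"
    then obtain t where t: "t - 1 \<in> M" "y = t * t" by blast
    have "t * t - 1 = (t - 1) * (t + 1)" by (simp add: algebra_simps)
    then show "y \<in> ?P" using ring_ideal_mult_right[OF ring_ideal_maxid t(1)] t(2) by simp
  qed
  have inj: "inj_on (\<lambda>t. t * t) ?P"
  proof
    fix s t assume s: "s \<in> ?P" and t: "t \<in> ?P" and eq: "s * s = t * t"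
    have "(s - 1) + (t - 1) \<in> M" using s t ring_ideal_add[OF ring_ideal_maxid] by blast
    moreover have "s + t = 2 + ((s - 1) + (t - 1))" by simp
    ultimately have u: "s + t \<in> U" using runit_add_maxid[OF two_runit] by metis
    have "(s + t) * (s - t) = 0" using eq by (simp add: algebra_simps)
    then have "s - t = 0" using runit_mult_eq_0[OF u] by blast
    then show "s = t" by simp
  qed
  have "(\<lambda>t. t * t) ` ?P = ?P" by (rule endo_inj_surj[OF _ sub inj]) simp
  moreover have "1 + m \<in> ?P" using assms by simp
  ultimately obtain s where "1 + m = s * s" by blast
  then show ?thesis by metis
qed

text \<open>Hensel lifting: if \<open>w \<equiv> v\<^sup>2\<close> modulo \<open>M\<close>, then \<open>w/v\<^sup>2 \<in> 1 + M\<close> has a square root.\<close>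
lemma residue_square_imp_square:
  fixes w :: 'a assumes w: "w \<in> U" "residue_square w" shows "\<exists>x. x * x = w"
proof -
  obtain v where v: "w - v * v \<in> M" using w(2) unfolding residue_square_def by blast
  have "v * v \<in> U" using ring_ideal_add[OF ring_ideal_maxid v] w(1) maxid_iff_nonunit by force
  then have vu: "v \<in> U" using square_runit_iff by blast
  define iv where "iv = uinv v"
  have iv: "v * iv = 1" unfolding iv_def using runit_right_inverse[OF vu] .
  obtain s where s: "s * s = 1 + iv * iv * (w - v * v)"
    using exists_sqrt_one_plus_maxid ring_ideal_mult_left[OF ring_ideal_maxid v] by blast
  have "iv * iv * (v * v) = (v * iv) * (v * iv)" by (simp add: ac_simps)
  then have "iv * iv * (v * v) = 1" using iv by simp
  then have "s * s = iv * iv * w" using s by (simp add: algebra_simps)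
  then have "(v * s) * (v * s) = (v * iv) * (v * iv) * w" by (metis mult.assoc mult.commute)
  then show ?thesis using iv by auto
qed

lemma card_sqrt:
  fixes w :: 'a
  assumes w: "w \<in> U"
  shows "card {x\<in>U. x * x = w} = (if residue_square w then 2 else 0)"
proof (cases "residue_square w")
  case False
  then have "{x\<in>U. x * x = w} = {}" using residue_square_square by blast
  then show ?thesis using False by simp
next
  case True
  obtain x0 where x0: "x0 * x0 = w" using residue_square_imp_square[OF w True] by blast
  have x0u: "x0 \<in> U" using square_runit_iff w x0 by blast
  have "{x\<in>U. x * x = w} = {x0, - x0}"
  proof
    show "{x0, - x0} \<subseteq> {x\<in>U. x * x = w}" using x0 x0u uminus_runits by auto
    show "{x\<in>U. x * x = w} \<subseteq> {x0, - x0}"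
    proof
      fix x assume "x \<in> {x\<in>U. x * x = w}"
      then have x: "x * x = x0 * x0" using x0 by auto
      define y where "y = x * uinv x0"
      have "y * y = (x * x) * (uinv x0 * uinv x0)" unfolding y_def by (simp add: ac_simps)
      also have "\<dots> = (x0 * uinv x0) * (x0 * uinv x0)" using x by (simp add: ac_simps)
      finally have "y = 1 \<or> y = -1" using square_eq_one runit_right_inverse[OF x0u] by simp
      moreover have "x = y * x0" unfolding y_def using runit_left_inverse[OF x0u] by (simp add: mult.assoc)
      ultimately show "x \<in> {x0, - x0}" by auto
    qed
  qed
  moreover have "x0 \<noteq> - x0"
  proof
    assume "x0 = - x0"
    then have "2 * x0 = 0" by (metis add.right_inverse mult_2)
    then show False using runit_mult_eq_0[OF two_runit] x0u runit_not_in_maxid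
      ring_ideal_zero[OF ring_ideal_maxid] by blast
  qed
  ultimately show ?thesis using True by simp
qed

lemma card_runits_eq_twice_residue_squares: "card (U :: 'a set) = 2 * card {w\<in>U. residue_square w}"
proof -
  have "card (U :: 'a set) = (\<Sum>x\<in>(U :: 'a set). (1::nat))" by simp
  also have "\<dots> = (\<Sum>w\<in>U. of_nat (card {x\<in>U. x * x = w}) * 1)"
    by (rule sum_comp_eq_sum_card_fibres[of U U "\<lambda>x. x * x" "\<lambda>_. 1::nat"]) (auto simp: mult_runits)
  also have "\<dots> = (\<Sum>w\<in>U. if residue_square w then 2 else 0)"
    by (rule sum.cong[OF refl]) (simp add: card_sqrt)
  also have "\<dots> = 2 * card {w\<in>U. residue_square w}"
    by (simp add: sum.If_cases Int_def conj_commute)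
  finally show ?thesis .
qed

lemma residue_square_mult:
  fixes a b :: 'a
  assumes "a \<in> U" "b \<in> U" "residue_square a"
  shows "residue_square (a * b) \<longleftrightarrow> residue_square b"
proof -
  obtain x where x: "x * x = a" using residue_square_imp_square[OF assms(1,3)] by blast
  have xu: "x \<in> U" using square_runit_iff assms(1) x by blast
  show ?thesis
  proof
    assume "residue_square (a * b)"
    then obtain z where z: "z * z = a * b"
      using residue_square_imp_square[OF mult_runits[OF assms(1,2)]] by blast
    have "(z * uinv x) * (z * uinv x) = (z * z) * (uinv x * uinv x)" by (simp add: ac_simps)
    also have "\<dots> = b * ((x * uinv x) * (x * uinv x))" using z by (simp add: x[symmetric] ac_simps)
    finally have "(z * uinv x) * (z * uinv x) = b" using runit_right_inverse[OF xu] by simp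
    then show "residue_square b" using residue_square_square by metis
  next
    assume "residue_square b"
    then obtain y where "y * y = b" using residue_square_imp_square[OF assms(2)] by blast
    then have "a * b = (x * y) * (x * y)" using x by (simp add: ac_simps)
    then show "residue_square (a * b)" using residue_square_square by simp
  qed
qed

text \<open>Multiplication by a non-square maps the squares injectively into the non-squares,
  which are equally many; so it hits every non-square.\<close>
lemma residue_square_mult_nonsquares:
  fixes a b :: 'a
  assumes "a \<in> U" "b \<in> U" "\<not> residue_square a" "\<not> residue_square b"
  shows "residue_square (a * b)"
proof -
  let ?Sq = "{w\<in>U. residue_square w}" and ?N = "{w\<in>U. \<not> residue_square w}"
  have "card (U :: 'a set) = card ?Sq + card ?N"
    by (subst card_Un_disjoint[symmetric]) (auto intro: arg_cong[where f = card])
  then have cN: "card ?N = card ?Sq" using card_runits_eq_twice_residue_squares by simp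
  have img: "(\<lambda>w. a * w) ` ?Sq \<subseteq> ?N"
    using residue_square_mult assms(1,3) mult_runits by (auto simp: mult.commute)
  have "inj_on (\<lambda>w. a * w) ?Sq" using runit_mult_left_cancel[OF assms(1)] by (auto intro: inj_onI)
  then have "card ((\<lambda>w. a * w) ` ?Sq) = card ?N" using cN by (simp add: card_image)
  then have "(\<lambda>w. a * w) ` ?Sq = ?N" using img by (intro card_subset_eq) simp_all
  then obtain w where w: "w \<in> U" "residue_square w" "b = a * w" using assms(2,4) by blast
  have "residue_square ((a * a) * w)"
    using residue_square_mult[OF mult_runits[OF assms(1,1)] w(1) residue_square_square] w(2) by blast
  then show ?thesis using w(3) by (simp add: ac_simps)
qed

lemma quad_char_runit: "u \<in> U \<Longrightarrow> quad_char u = (if residue_square u then 1 else -1)"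
  unfolding quad_char_def residue_square_def by simp

lemma mult_char_quad_char: "mult_char (quad_char :: 'a \<Rightarrow> complex)"
  unfolding mult_char_def
proof (intro conjI ballI allI impI)
  fix u v :: 'a assume u: "u \<in> U" and v: "v \<in> U"
  have "residue_square (u * v) \<longleftrightarrow> (residue_square u \<longleftrightarrow> residue_square v)"
    using residue_square_mult[OF u v] residue_square_mult[OF v u] residue_square_mult_nonsquares[OF u v]
    by (auto simp: mult.commute)
  then show "quad_char (u * v) = quad_char u * quad_char v"
    unfolding quad_char_runit[OF u] quad_char_runit[OF v] quad_char_runit[OF mult_runits[OF u v]]
    by auto
qed (simp_all add: quad_char_def)

lemma quad_char_nontrivial: "\<not> trivial_char (quad_char :: 'a \<Rightarrow> complex)"
proof -
  have "card (U :: 'a set) \<noteq> 0" using one_runits by (metis card_0_eq empty_iff finite)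
  then have "{w\<in>U. residue_square w} \<noteq> (U :: 'a set)"
    using card_runits_eq_twice_residue_squares by (metis mult_2 add_cancel_right_left)
  then obtain u :: 'a where "u \<in> U" "\<not> residue_square u" by blast
  then show ?thesis unfolding trivial_char_def using quad_char_runit by force
qed

lemma sum_runits_square_minus_square:
  fixes f :: "'a \<Rightarrow> complex"
  assumes y: "y \<in> M"
  shows "(\<Sum>x\<in>U. f (x * x - y * y)) = (\<Sum>z\<in>U. (1 + quad_char z) * f z)"
proof -
  have yy: "- (y * y) \<in> M" using ring_ideal_uminus[OF ring_ideal_maxid ring_ideal_mult_right[OF ring_ideal_maxid y]] .
  have "(\<Sum>x\<in>U. f (x * x - y * y)) = (\<Sum>z\<in>U. of_nat (card {x\<in>U. x * x - y * y = z}) * f z)"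
    using runit_add_maxid[OF mult_runits yy] by (intro sum_comp_eq_sum_card_fibres) auto
  also have "\<dots> = (\<Sum>z\<in>U. (1 + quad_char z) * f z)"
  proof (rule sum.cong[OF refl])
    fix z assume z: "z \<in> U"
    have "z + y * y \<in> U" using runit_add_maxid[OF z ring_ideal_mult_right[OF ring_ideal_maxid y]] .
    moreover have "{x\<in>U. x * x - y * y = z} = {x\<in>U. x * x = z + y * y}" by (auto simp: algebra_simps)
    moreover have "residue_square (z + y * y) \<longleftrightarrow> residue_square z"
      by (rule residue_square_cong) (simp add: ring_ideal_mult_right[OF ring_ideal_maxid y])
    ultimately show "of_nat (card {x\<in>U. x * x - y * y = z}) * f z = (1 + quad_char z) * f z"
      using card_sqrt quad_char_runit[OF z] by simp
  qed
  finally show ?thesis .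
qed

end

section \<open>The moment for non-primitive characters\<close>

definition kloosterman_sq_antidiag :: "('a::comm_ring_1 \<Rightarrow> complex) \<Rightarrow> ('a \<Rightarrow> complex) \<Rightarrow> 'a \<Rightarrow> complex" where
  "kloosterman_sq_antidiag \<psi> \<tau> a = (\<Sum>(u, v)\<in>{(u, v). u \<in> runits \<and> v \<in> runits \<and> u + v \<in> maxid}.
     \<tau> u * \<tau> v * \<psi> (u + v + a * (uinv u + uinv v)))"

context frobenius_local_ring
begin

lemma kloosterman_sq_translate:
  "(kloosterman \<psi> \<tau> ((1 + s) * a))\<^sup>2 = (\<Sum>u\<in>U. \<Sum>v\<in>U.
     \<tau> u * \<tau> v * \<psi> (u + v + a * (uinv u + uinv v)) * \<psi> (a * (uinv u + uinv v) * s))"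
  unfolding kloosterman_def power2_eq_square sum_product
proof (intro sum.cong refl)
  fix u v
  have "(u + ((1 + s) * a) * uinv u) + (v + ((1 + s) * a) * uinv v) =
      (u + v + a * (uinv u + uinv v)) + a * (uinv u + uinv v) * s"
    by (simp add: algebra_simps)
  then have "\<psi> (u + ((1 + s) * a) * uinv u) * \<psi> (v + ((1 + s) * a) * uinv v) =
      \<psi> (u + v + a * (uinv u + uinv v)) * \<psi> (a * (uinv u + uinv v) * s)"
    by (metis psi_add)
  then show "\<tau> u * \<psi> (u + ((1 + s) * a) * uinv u) * (\<tau> v * \<psi> (v + ((1 + s) * a) * uinv v)) =
      \<tau> u * \<tau> v * \<psi> (u + v + a * (uinv u + uinv v)) * \<psi> (a * (uinv u + uinv v) * s)"
    by (simp add: ac_simps)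
qed

text \<open>Averaging over the translates \<open>a \<mapsto> (1 + s) a\<close>, \<open>s \<in> ann_maxid\<close>: the \<open>(u, v)\<close>-term of
  \<open>K((1 + s) a)\<^sup>2\<close> picks up the factor \<open>\<psi>(a (1/u + 1/v) s)\<close>, which averages to zero unless
  \<open>u + v \<in> M\<close>.\<close>
lemma sum_kloosterman_sq_ann_maxid:
  fixes \<tau> :: "'a \<Rightarrow> complex"
  assumes a: "a \<in> U"
  shows "(\<Sum>s\<in>ann_maxid. (kloosterman \<psi> \<tau> ((1 + s) * a))\<^sup>2) =
    of_nat (card (ann_maxid :: 'a set)) * kloosterman_sq_antidiag \<psi> \<tau> a"
proof -
  define g where "g = (\<lambda>u v. \<tau> u * \<tau> v * \<psi> (u + v + a * (uinv u + uinv v)))"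
  define c where "c = (\<lambda>u v. a * (uinv u + uinv v))"
  have square: "(kloosterman \<psi> \<tau> ((1 + s) * a))\<^sup>2 = (\<Sum>u\<in>U. \<Sum>v\<in>U. g u v * \<psi> (c u v * s))" for s
    unfolding kloosterman_sq_translate g_def c_def ..
  have inner: "(\<Sum>s\<in>ann_maxid. \<psi> (c u v * s)) = (if u + v \<in> M then of_nat (card (ann_maxid::'a set)) else 0)"
    if u: "u \<in> U" and v: "v \<in> U" for u v
  proof -
    have "c u v = (a * uinv (u * v)) * (u + v)"
      unfolding c_def uinv_add[OF u v] by (simp add: ac_simps)
    then have "c u v \<in> M \<longleftrightarrow> u + v \<in> M"
      using runit_mult_maxid_iff mult_runits[OF a uinv_runits[OF mult_runits[OF u v]]] by simp
    then show ?thesis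
      unfolding sum_psi_ideal[OF ring_ideal_ann_maxid] annihilates_ann_maxid_iff by simp
  qed
  have "(\<Sum>s\<in>ann_maxid. (kloosterman \<psi> \<tau> ((1 + s) * a))\<^sup>2) =
      (\<Sum>u\<in>U. \<Sum>v\<in>U. g u v * (\<Sum>s\<in>ann_maxid. \<psi> (c u v * s)))"
    unfolding square by (subst sum.swap, rule sum.cong[OF refl], subst sum.swap) (simp add: sum_distrib_left)
  also have "\<dots> = (\<Sum>(u, v)\<in>U \<times> U. if u + v \<in> M then of_nat (card (ann_maxid::'a set)) * g u v else 0)"
    unfolding sum.cartesian_product by (rule sum.cong) (auto simp: inner)
  also have "\<dots> = of_nat (card (ann_maxid :: 'a set)) * kloosterman_sq_antidiag \<psi> \<tau> a"
    unfolding kloosterman_sq_antidiag_def g_def sum_distrib_left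
    by (rule sum.mono_neutral_cong_right) (auto split: if_splits)
  finally show ?thesis .
qed

lemma sum_mult_char_kloosterman_sq_antidiag:
  fixes \<chi> \<tau> :: "'a \<Rightarrow> complex"
  assumes \<chi>: "mult_char \<chi>" and \<chi>_ann: "\<forall>v\<in>ann_maxid. \<chi> (1 + v) = 1" and M: "M \<noteq> {0}"
  shows "(\<Sum>a\<in>U. \<chi> a * (kloosterman \<psi> \<tau> a)\<^sup>2) = (\<Sum>a\<in>U. \<chi> a * kloosterman_sq_antidiag \<psi> \<tau> a)"
proof -
  let ?S = "(\<Sum>a\<in>U. \<chi> a * (kloosterman \<psi> \<tau> a)\<^sup>2)"
  let ?n = "of_nat (card (ann_maxid::'a set)) :: complex"
  have translate: "?S = (\<Sum>a\<in>U. \<chi> a * (kloosterman \<psi> \<tau> ((1 + s) * a))\<^sup>2)" if s: "s \<in> ann_maxid" for s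
  proof -
    have c: "1 + s \<in> U" using s ann_maxid_subset_maxid[OF M] runit_add_maxid[OF one_runits] by blast
    have "?S = (\<Sum>a\<in>U. \<chi> ((1 + s) * a) * (kloosterman \<psi> \<tau> ((1 + s) * a))\<^sup>2)"
      using sum_runits_reindex_mult[OF c, of "\<lambda>a. \<chi> a * (kloosterman \<psi> \<tau> a)\<^sup>2"] by simp
    also have "\<dots> = (\<Sum>a\<in>U. \<chi> a * (kloosterman \<psi> \<tau> ((1 + s) * a))\<^sup>2)"
      by (rule sum.cong[OF refl]) (simp add: mult_char_mult[OF \<chi> c] \<chi>_ann s)
    finally show ?thesis .
  qed
  have "?n * ?S = (\<Sum>s\<in>(ann_maxid::'a set). ?S)" by (simp only: sum_constant)
  also have "\<dots> = (\<Sum>s\<in>ann_maxid. \<Sum>a\<in>U. \<chi> a * (kloosterman \<psi> \<tau> ((1 + s) * a))\<^sup>2)"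
    by (intro sum.cong refl translate)
  also have "\<dots> = (\<Sum>a\<in>U. \<chi> a * (\<Sum>s\<in>ann_maxid. (kloosterman \<psi> \<tau> ((1 + s) * a))\<^sup>2))"
    by (subst sum.swap) (simp add: sum_distrib_left)
  also have "\<dots> = (\<Sum>a\<in>U. \<chi> a * (?n * kloosterman_sq_antidiag \<psi> \<tau> a))"
    by (intro sum.cong refl) (simp add: sum_kloosterman_sq_ann_maxid)
  also have "\<dots> = ?n * (\<Sum>a\<in>U. \<chi> a * kloosterman_sq_antidiag \<psi> \<tau> a)"
    by (simp add: sum_distrib_left ac_simps)
  finally show ?thesis using ring_ideal_zero[OF ring_ideal_ann_maxid] by auto
qed

end

context finite_local_ring
begin

text \<open>For \<open>u = x + y\<close>, \<open>v = y - x\<close>: \<open>u v = -(x\<^sup>2 - y\<^sup>2)\<close> and \<open>1/u + 1/v = -2y/(x\<^sup>2 - y\<^sup>2)\<close>.\<close>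
lemma kloosterman_sq_antidiag_term_subst:
  fixes \<tau> :: "'a \<Rightarrow> complex"
  assumes \<tau>: "mult_char \<tau>" and x: "x \<in> U" and y: "y \<in> M"
  shows "\<tau> (x + y) * \<tau> (y - x) * \<psi> ((x + y) + (y - x) + a * (uinv (x + y) + uinv (y - x))) =
    \<tau> (-1) * \<tau> (x * x - y * y) * \<psi> (y * (2 * (1 - a * uinv (x * x - y * y))))"
proof -
  define z where "z = x * x - y * y"
  have u: "x + y \<in> U" using runit_add_maxid[OF x y] .
  have v: "y - x \<in> U" using runit_add_maxid[OF uminus_runits[OF x] y] by (simp add: add.commute)
  have z: "z \<in> U"
    unfolding z_def using runit_add_maxid[OF mult_runits[OF x x] ring_ideal_uminus[OF ring_ideal_maxid
        ring_ideal_mult_right[OF ring_ideal_maxid y]]] by simp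
  have uv: "(x + y) * (y - x) = (-1) * z" unfolding z_def by (simp add: algebra_simps)
  have \<tau>_uv: "\<tau> (x + y) * \<tau> (y - x) = \<tau> (-1) * \<tau> z"
    using mult_char_mult[OF \<tau> u v] mult_char_mult[OF \<tau> uminus_one_runits z] uv by simp
  have "uinv (x + y) + uinv (y - x) = ((x + y) + (y - x)) * uinv ((-1) * z)"
    using uinv_add[OF u v] uv by simp
  also have "\<dots> = - ((2 * y) * uinv z)" using uinv_uminus[OF z] by (simp add: algebra_simps mult_2)
  finally have "(x + y) + (y - x) + a * (uinv (x + y) + uinv (y - x)) = y * (2 * (1 - a * uinv z))"
    by (simp add: algebra_simps mult_2)
  with \<tau>_uv show ?thesis unfolding z_def by simp
qed

end

context odd_local_ring
begin

lemma two_mult_ann_maxid_iff: "2 * c \<in> ann_maxid \<longleftrightarrow> c \<in> (ann_maxid :: 'a set)"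
proof
  assume "2 * c \<in> ann_maxid"
  then have "uinv 2 * (2 * c) \<in> ann_maxid" by (rule ring_ideal_mult_left[OF ring_ideal_ann_maxid])
  then show "c \<in> ann_maxid" using runit_left_inverse[OF two_runit] by (simp add: mult.assoc[symmetric])
qed (rule ring_ideal_mult_left[OF ring_ideal_ann_maxid])

lemma ann_maxid_coset_chars:
  fixes \<tau> :: "'a \<Rightarrow> complex"
  assumes \<tau>: "mult_char \<tau>" "\<forall>v\<in>ann_maxid. \<tau> (1 + v) = 1" and M: "M \<noteq> {0}"
    and a: "a \<in> U" and z: "z \<in> U" and s: "1 - a * uinv z \<in> ann_maxid"
  shows "\<tau> z = \<tau> a" "quad_char z = quad_char a"
proof -
  define t where "t = - (1 - a * uinv z)"
  have t: "t \<in> ann_maxid" "t \<in> M"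
    unfolding t_def using ring_ideal_uminus[OF ring_ideal_ann_maxid s] ann_maxid_subset_maxid[OF M] by auto
  have az: "a = z * (1 + t)" unfolding t_def using runit_right_inverse[OF z] by (simp add: algebra_simps)
  show "\<tau> z = \<tau> a"
    unfolding az using mult_char_mult[OF \<tau>(1) z runit_add_maxid[OF one_runits t(2)]] \<tau>(2) t(1) by simp
  have "a - z \<in> M" using ring_ideal_mult_left[OF ring_ideal_maxid t(2), of z] by (simp add: az algebra_simps)
  then show "quad_char z = quad_char a" using residue_square_cong quad_char_runit a z by metis
qed

text \<open>The substitution \<open>(u, v) = (x + y, y - x)\<close> is invertible since \<open>2 \<in> U\<close>.\<close>
lemma kloosterman_sq_antidiag_param:
  fixes \<tau> :: "'a \<Rightarrow> complex"
  assumes \<tau>: "mult_char \<tau>"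
  shows "kloosterman_sq_antidiag \<psi> \<tau> a =
    (\<Sum>(x, y)\<in>U \<times> M. \<tau> (-1) * \<tau> (x * x - y * y) * \<psi> (y * (2 * (1 - a * uinv (x * x - y * y)))))"
proof -
  define h where "h = uinv (2::'a)"
  have h2: "h * 2 = 1" unfolding h_def using runit_left_inverse[OF two_runit] .
  have hu: "h \<in> U" unfolding h_def using uinv_runits[OF two_runit] .
  show ?thesis
    unfolding kloosterman_sq_antidiag_def
  proof (rule sym, rule sum.reindex_bij_witness[where j = "\<lambda>(x, y). (x + y, y - x)"
        and i = "\<lambda>(u, v). (h * (u - v), h * (u + v))"])
    fix p assume "p \<in> U \<times> M"
    then obtain x y where p: "p = (x, y)" and x: "x \<in> U" and y: "y \<in> M" by auto
    have "h * ((x + y) - (y - x)) = (h * 2) * x" "h * ((x + y) + (y - x)) = (h * 2) * y"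
      by (simp_all add: algebra_simps mult_2)
    then show "(case case p of (x, y) \<Rightarrow> (x + y, y - x) of
        (u, v) \<Rightarrow> (h * (u - v), h * (u + v))) = p" unfolding p using h2 by simp
    have u: "x + y \<in> U" using runit_add_maxid[OF x y] .
    have v: "y - x \<in> U" using runit_add_maxid[OF uminus_runits[OF x] y] by (simp add: add.commute)
    have "(x + y) + (y - x) \<in> M" using ring_ideal_add[OF ring_ideal_maxid y y] by simp
    then show "(case p of (x, y) \<Rightarrow> (x + y, y - x)) \<in> {(u, v). u \<in> U \<and> v \<in> U \<and> u + v \<in> M}"
      unfolding p using u v by simp
    show "(case case p of (x, y) \<Rightarrow> (x + y, y - x) of
        (u, v) \<Rightarrow> \<tau> u * \<tau> v * \<psi> (u + v + a * (uinv u + uinv v))) =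
      (case p of (x, y) \<Rightarrow> \<tau> (-1) * \<tau> (x * x - y * y) * \<psi> (y * (2 * (1 - a * uinv (x * x - y * y)))))"
      unfolding p using kloosterman_sq_antidiag_term_subst[OF \<tau> x y] by simp
  next
    fix q assume "q \<in> {(u, v). u \<in> U \<and> v \<in> U \<and> u + v \<in> M}"
    then obtain u v where q: "q = (u, v)" and u: "u \<in> U" and v: "v \<in> U" and uv: "u + v \<in> M" by auto
    have "h * (u - v) + h * (u + v) = (h * 2) * u"
      "h * (u + v) - h * (u - v) = (h * 2) * v"
      by (simp_all add: algebra_simps mult_2)
    then show "(case case q of (u, v) \<Rightarrow> (h * (u - v), h * (u + v)) of
        (x, y) \<Rightarrow> (x + y, y - x)) = q" unfolding q using h2 by simp
    have "u - v = 2 * u + - (u + v)" by (simp add: algebra_simps mult_2)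
    then have "u - v \<in> U"
      using runit_add_maxid[OF mult_runits[OF two_runit u] ring_ideal_uminus[OF ring_ideal_maxid uv]] by simp
    then show "(case q of (u, v) \<Rightarrow> (h * (u - v), h * (u + v))) \<in> U \<times> M"
      unfolding q using mult_runits[OF hu] ring_ideal_mult_left[OF ring_ideal_maxid uv] by simp
  qed
qed

end

locale odd_frobenius_local_ring =
  frobenius_local_ring ring_type \<psi> + odd_local_ring ring_type
  for ring_type :: "'a::{comm_ring_1,finite} itself" and \<psi> :: "'a \<Rightarrow> complex"
begin

text \<open>After the parametrisation, summing \<open>\<psi>(y c)\<close> over \<open>y \<in> M\<close> keeps exactly the \<open>z = x\<^sup>2 - y\<^sup>2\<close>
  with \<open>1 - a/z \<in> ann_maxid\<close>; all of them have \<open>\<tau>(z) = \<tau>(a)\<close> and \<open>\<sigma>(z) = \<sigma>(a)\<close>.\<close>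
lemma kloosterman_sq_antidiag_eq:
  fixes \<tau> :: "'a \<Rightarrow> complex"
  assumes \<tau>: "mult_char \<tau>" "\<forall>v\<in>ann_maxid. \<tau> (1 + v) = 1" and M: "M \<noteq> {0}" and a: "a \<in> U"
  shows "kloosterman_sq_antidiag \<psi> \<tau> a = \<tau> (-1) * of_nat (card (UNIV::'a set)) * \<tau> a * (1 + quad_char a)"
proof -
  define Z where "Z = {z\<in>U. 1 - a * uinv z \<in> ann_maxid}"
  define c where "c = (\<lambda>z. 2 * (1 - a * uinv z))"
  define C where "C = (1 + quad_char a) * \<tau> (-1) * \<tau> a * of_nat (card M)"
  have sum_M: "(\<Sum>y\<in>M. \<psi> (c z * y)) = (if z \<in> Z then of_nat (card M) else 0)" if "z \<in> U" for z
    unfolding sum_psi_maxid c_def two_mult_ann_maxid_iff Z_def using that by simp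
  have "kloosterman_sq_antidiag \<psi> \<tau> a = (\<Sum>y\<in>M. \<Sum>x\<in>U. \<tau> (-1) * \<tau> (x * x - y * y) * \<psi> (y * c (x * x - y * y)))"
    unfolding kloosterman_sq_antidiag_param[OF \<tau>(1)] c_def sum.cartesian_product[symmetric]
    by (rule sum.swap)
  also have "\<dots> = (\<Sum>y\<in>M. \<Sum>z\<in>U. (1 + quad_char z) * (\<tau> (-1) * \<tau> z * \<psi> (y * c z)))"
    by (intro sum.cong refl sum_runits_square_minus_square)
  also have "\<dots> = (\<Sum>z\<in>U. (1 + quad_char z) * \<tau> (-1) * \<tau> z * (\<Sum>y\<in>M. \<psi> (c z * y)))"
    by (subst sum.swap) (simp add: sum_distrib_left ac_simps)
  also have "\<dots> = (\<Sum>z\<in>U. if z \<in> Z then C else 0)"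
    using ann_maxid_coset_chars[OF \<tau> M a] unfolding C_def Z_def by (intro sum.cong refl) (simp add: sum_M Z_def)
  also have "\<dots> = of_nat (card Z) * C"
    unfolding Z_def by (simp add: sum.If_cases Int_def conj_commute)
  also have "card Z = card (ann_maxid :: 'a set)" unfolding Z_def by (rule card_ann_maxid_coset[OF a M])
  finally show ?thesis
    using card_ann_maxid_mult_card_maxid unfolding C_def by (simp add: ac_simps flip: of_nat_mult)
qed

lemma sum_mult_char_kloosterman_sq_nonprimitive:
  fixes \<chi> \<tau> :: "'a \<Rightarrow> complex"
  assumes M: "M \<noteq> {0}"
    and \<chi>: "mult_char \<chi>" "\<not> primitive_mult_char \<chi>"
    and \<tau>: "mult_char \<tau>" "\<not> primitive_mult_char \<tau>"
  shows "(\<Sum>a\<in>U. \<chi> a * (kloosterman \<psi> \<tau> a)\<^sup>2) =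
    (if \<chi> = (\<lambda>u. cnj (\<tau> u)) \<or> \<chi> = (\<lambda>u. quad_char u * cnj (\<tau> u))
     then \<tau> (-1) * of_nat (card (U :: 'a set)) * of_nat (card (UNIV :: 'a set)) else 0)"
proof -
  define \<tau>\<sigma> where "\<tau>\<sigma> = (\<lambda>u. \<tau> u * quad_char u)"
  have \<tau>\<sigma>: "mult_char \<tau>\<sigma>" unfolding \<tau>\<sigma>_def by (rule mult_char_mult_char[OF \<tau>(1) mult_char_quad_char])
  have cnj_\<tau>\<sigma>: "(\<lambda>u. cnj (\<tau>\<sigma> u)) = (\<lambda>u. quad_char u * cnj (\<tau> u))"
    unfolding \<tau>\<sigma>_def quad_char_def by auto
  have not_both: "\<not> (\<chi> = (\<lambda>u. cnj (\<tau> u)) \<and> \<chi> = (\<lambda>u. quad_char u * cnj (\<tau> u)))"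
  proof
    assume "\<chi> = (\<lambda>u. cnj (\<tau> u)) \<and> \<chi> = (\<lambda>u. quad_char u * cnj (\<tau> u))"
    then have "quad_char u = 1" if "u \<in> U" for u
      using mult_char_nonzero[OF \<tau>(1) that] by (metis complex_cnj_zero_iff mult_cancel_right1)
    then show False using quad_char_nontrivial unfolding trivial_char_def by blast
  qed
  have "(\<Sum>a\<in>U. \<chi> a * (kloosterman \<psi> \<tau> a)\<^sup>2) = (\<Sum>a\<in>U. \<chi> a * kloosterman_sq_antidiag \<psi> \<tau> a)"
    using sum_mult_char_kloosterman_sq_antidiag primitive_mult_char_iff_ann_maxid[OF M] \<chi> M by blast
  also have "\<dots> = \<tau> (-1) * of_nat (card (UNIV :: 'a set)) * ((\<Sum>a\<in>U. \<chi> a * \<tau> a) + (\<Sum>a\<in>U. \<chi> a * \<tau>\<sigma> a))"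
    using kloosterman_sq_antidiag_eq[OF \<tau>(1) _ M] primitive_mult_char_iff_ann_maxid[OF M] \<tau>
    unfolding \<tau>\<sigma>_def by (simp add: sum_distrib_left sum.distrib[symmetric] algebra_simps)
  finally show ?thesis
    using not_both unfolding sum_mult_char_mult_char[OF \<chi>(1) \<tau>(1)] sum_mult_char_mult_char[OF \<chi>(1) \<tau>\<sigma>] cnj_\<tau>\<sigma>
    by auto
qed

end

theorem mainTheorem11:
  fixes \<psi> \<tau> :: "'a::{comm_ring_1, finite} \<Rightarrow> complex"
  assumes loc: "local_ring TYPE('a)"
    and psi: "primitive_additive_char \<psi>"
    and tau: "mult_char \<tau>" and tau_np: "\<not> primitive_mult_char \<tau>"
  shows "(\<forall>\<chi>. mult_char \<chi> \<and> primitive_mult_char \<chi> \<longrightarrow>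
            (\<Sum>a\<in>runits. \<chi> a * (kloosterman \<psi> \<tau> a)\<^sup>2) =
              jacobi_sum \<chi> (\<lambda>u. \<chi> u * (\<tau> u)\<^sup>2) * (gauss_sum \<psi> (\<lambda>u. \<chi> u * \<tau> u))\<^sup>2)
       \<and> (\<not> is_field_ring TYPE('a) \<and> odd (residue_char TYPE('a)) \<longrightarrow>
          (\<forall>\<chi>. mult_char \<chi> \<and> \<not> primitive_mult_char \<chi> \<longrightarrow>
            (\<Sum>a\<in>runits. \<chi> a * (kloosterman \<psi> \<tau> a)\<^sup>2) =
              (if \<chi> = (\<lambda>u. cnj (\<tau> u)) \<or> \<chi> = (\<lambda>u. quad_char u * cnj (\<tau> u))
               then \<tau> (-1) * of_nat (card (runits :: 'a set)) * of_nat (card (UNIV :: 'a set))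
               else 0)))"
proof -
  interpret frobenius_local_ring "TYPE('a)" \<psi>
    by (unfold_locales) (fact loc, fact psi)
  show ?thesis
  proof (intro conjI allI impI)
    fix \<chi> :: "'a \<Rightarrow> complex"
    assume "mult_char \<chi> \<and> primitive_mult_char \<chi>"
    then show "(\<Sum>a\<in>runits. \<chi> a * (kloosterman \<psi> \<tau> a)\<^sup>2) =
        jacobi_sum \<chi> (\<lambda>u. \<chi> u * (\<tau> u)\<^sup>2) * (gauss_sum \<psi> (\<lambda>u. \<chi> u * \<tau> u))\<^sup>2"
      using sum_mult_char_kloosterman_sq_primitive tau tau_np by blast
  next
    fix \<chi> :: "'a \<Rightarrow> complex"
    assume R: "\<not> is_field_ring TYPE('a) \<and> odd (residue_char TYPE('a))"
      and \<chi>: "mult_char \<chi> \<and> \<not> primitive_mult_char \<chi>"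
    interpret odd_frobenius_local_ring "TYPE('a)" \<psi>
      by (unfold_locales) (use R two_runit_if_odd_residue_char in blast)
    show "(\<Sum>a\<in>runits. \<chi> a * (kloosterman \<psi> \<tau> a)\<^sup>2) =
        (if \<chi> = (\<lambda>u. cnj (\<tau> u)) \<or> \<chi> = (\<lambda>u. quad_char u * cnj (\<tau> u))
         then \<tau> (-1) * of_nat (card (runits :: 'a set)) * of_nat (card (UNIV :: 'a set)) else 0)"
      using sum_mult_char_kloosterman_sq_nonprimitive maxid_ne_zero_if_not_field R \<chi> tau tau_np by blast
  qed
qed

end
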